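(* Let $\alpha,\gamma,\kappa$ be constants and $n=2^t$ such that $$7n^2 \frac{(\gamma n)^{\kappa n}}{(\kappa n)!} +3n^3\frac{(2\gamma n)^{(1-\alpha-2\gamma)n/3}}{((1-\alpha-2\gamma)n/3)!} < 1.$$ Then for any $(\gamma n,\gamma n,\gamma n,\gamma n)$-cube $A$ of order $n$ there is a quadruple $\sigma=(\tau_1,\tau_2,\tau_3,\tau_4)$ of permutations of $[n]$ (acting on the row layers, column layers, file layers and symbols, respectively) such that the Latin cube $L$ obtained by applying $\sigma$ to the Boolean Latin cube $B$ of order $n$ satisfies: (a) no row of $L$ contains more than $\kappa n$ conflicts with $A$; (b) no column of $L$ contains more than $\kappa n$ conflicts with $A$; (c) no file of $L$ contains more than $\kappa n$ conflicts with $A$; (d) no symbol-set of $L$ contains more than $\kappa n$ conflicts with $A$; (e) no transversal-set of $L$ contains more than $\kappa n$ conflicts with $A$; (f) each cell of $L$ belongs to at least $\alpha n$ allowed $3$-cubes of $L$.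
   Context: Cells of a cube of order $n$ are triples $(i,j,k)\in[n]^3$. A row is $\{(i,j^*,k):j^*\in[n]\}$, a column $\{(i^*,j,k):i^*\in[n]\}$, a file $\{(i,j,k^* ):k^*\in[n]\}$. Row layer $i$ is $\{(i,j^*,k^* )\}$, column layer $j$ is $\{(i^*,j,k^* )\}$, file layer $k$ is $\{(i^*,j^*,k)\}$. An $(m,m,m,m)$-cube of order $n$ is a cube $A$ with $A(i,j,k)\subseteq[n]$ for each cell, each cell containing at most $m$ symbols and each symbol occurring at most $m$ times in each row, each column and each file. A Latin cube $L$ of order $n$ has one symbol $L(i,j,k)\in[n]$ in each cell with each symbol exactly once in every row, column and file. Let $a_x$ be the $x$-th smallest element of $\mathbb{Z}_2^t$ (in the natural order of binary strings), $x=1,\dots,2^t$. The Boolean Latin cube $B$ of order $n=2^t$ has $B(i,j,k)=x$ where $a_x=a_i+a_j+a_k$ in $\mathbb{Z}_2^t$. Applying $\sigma=(\tau_1,\tau_2,\tau_3,\tau_4)$ to $B$ gives $L$ with $L(\tau_1(i),\tau_2(j),\tau_3(k))=\tau_4(B(i,j,k))$. A conflict of $L$ with $A$ is a cell with $L(i,j,k)\in A(i,j,k)$. A symbol-set of $L$ is the set of all cells in a given row layer, column layer or file layer of $L$ that contain a given symbol. A $3$-cube in $L$ is a set of eight cells $\{(i_a,j_b,k_c): a,b,c\in\{1,2\}\}$ with $i_1\ne i_2$, $j_1\neq j_2$, $k_1\ne k_2$, such that $L(i_1,j_1,k_1)=L(i_2,j_2,k_1)=L(i_1,j_2,k_2)=L(i_2,j_1,k_2)=x_1$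 and $L(i_1,j_2,k_1)=L(i_2,j_1,k_1)=L(i_1,j_1,k_2)=L(i_2,j_2,k_2)=x_2$. A swap on this $3$-cube replaces $x_1$ by $x_2$ and $x_2$ by $x_1$ in these eight cells (leaving all other cells unchanged), producing another Latin cube. A $3$-cube is allowed if after swapping on it none of its eight cells is a conflict. A transversal-set of $L$ is a set of $n$ cells no two in the same row, column or file, no two containing the same symbol, and such that any two of its cells lie in a unique common $3$-cube. Following the paper's convention, floors/ceilings are omitted, so quantities like $\gamma n$, $\kappa n$, $(1-\alpha-2\gamma)n/3$ are treated as integers. *)

theory Defs
  imports Complex_Main "HOL-Combinatorics.Permutations"
begin

type_synonym cell = "nat \<times> nat \<times> nat"

definition cells :: "nat \<Rightarrow> cell set" where
  "cells n = {1..n} \<times> {1..n} \<times> {1..n}"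

definition mcube :: "nat \<Rightarrow> nat \<Rightarrow> (cell \<Rightarrow> nat set) \<Rightarrow> bool" where
  "mcube n m A \<longleftrightarrow>
     (\<forall>c\<in>cells n. A c \<subseteq> {1..n} \<and> card (A c) \<le> m) \<and>
     (\<forall>i\<in>{1..n}. \<forall>k\<in>{1..n}. \<forall>s. card {j\<in>{1..n}. s \<in> A (i,j,k)} \<le> m) \<and>
     (\<forall>j\<in>{1..n}. \<forall>k\<in>{1..n}. \<forall>s. card {i\<in>{1..n}. s \<in> A (i,j,k)} \<le> m) \<and>
     (\<forall>i\<in>{1..n}. \<forall>j\<in>{1..n}. \<forall>s. card {k\<in>{1..n}. s \<in> A (i,j,k)} \<le> m)"

text \<open>Boolean Latin cube of order 2^t: a_x is the binary representation of x-1,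
  so B(i,j,k) = ((i-1) xor (j-1) xor (k-1)) + 1.\<close>
definition boolean_cube :: "cell \<Rightarrow> nat" where
  "boolean_cube c = (case c of (i,j,k) \<Rightarrow> xor (xor (i-1) (j-1)) (k-1) + 1)"

text \<open>L(tau1 i, tau2 j, tau3 k) = tau4 (B(i,j,k)).\<close>
definition apply_sigma ::
  "(nat \<Rightarrow> nat) \<Rightarrow> (nat \<Rightarrow> nat) \<Rightarrow> (nat \<Rightarrow> nat) \<Rightarrow> (nat \<Rightarrow> nat) \<Rightarrow> (cell \<Rightarrow> nat) \<Rightarrow> cell \<Rightarrow> nat" where
  "apply_sigma \<tau>1 \<tau>2 \<tau>3 \<tau>4 B c =
     (case c of (i,j,k) \<Rightarrow> \<tau>4 (B (inv \<tau>1 i, inv \<tau>2 j, inv \<tau>3 k)))"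

definition conflicts :: "nat \<Rightarrow> (cell \<Rightarrow> nat) \<Rightarrow> (cell \<Rightarrow> nat set) \<Rightarrow> cell set" where
  "conflicts n L A = {c\<in>cells n. L c \<in> A c}"

definition rows :: "nat \<Rightarrow> cell set set" where
  "rows n = {{(i,j',k) | j'. j'\<in>{1..n}} | i k. i\<in>{1..n} \<and> k\<in>{1..n}}"
definition columns :: "nat \<Rightarrow> cell set set" where
  "columns n = {{(i',j,k) | i'. i'\<in>{1..n}} | j k. j\<in>{1..n} \<and> k\<in>{1..n}}"
definition files :: "nat \<Rightarrow> cell set set" where
  "files n = {{(i,j,k') | k'. k'\<in>{1..n}} | i j. i\<in>{1..n} \<and> j\<in>{1..n}}"

definition symbol_sets :: "nat \<Rightarrow> (cell \<Rightarrow> nat) \<Rightarrow> cell set set" where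
  "symbol_sets n L =
     {{c\<in>cells n. fst c = i \<and> L c = s} | i s. i\<in>{1..n} \<and> s\<in>{1..n}} \<union>
     {{c\<in>cells n. fst (snd c) = j \<and> L c = s} | j s. j\<in>{1..n} \<and> s\<in>{1..n}} \<union>
     {{c\<in>cells n. snd (snd c) = k \<and> L c = s} | k s. k\<in>{1..n} \<and> s\<in>{1..n}}"

definition is_3cube :: "nat \<Rightarrow> (cell \<Rightarrow> nat) \<Rightarrow> cell set \<Rightarrow> bool" where
  "is_3cube n L C \<longleftrightarrow>
     (\<exists>i1\<in>{1..n}. \<exists>i2\<in>{1..n}. \<exists>j1\<in>{1..n}. \<exists>j2\<in>{1..n}. \<exists>k1\<in>{1..n}. \<exists>k2\<in>{1..n}.
      \<exists>x1 x2. i1 \<noteq> i2 \<and> j1 \<noteq> j2 \<and> k1 \<noteq> k2 \<and>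
        C = {i1,i2} \<times> {j1,j2} \<times> {k1,k2} \<and>
        L (i1,j1,k1) = x1 \<and> L (i2,j2,k1) = x1 \<and> L (i1,j2,k2) = x1 \<and> L (i2,j1,k2) = x1 \<and>
        L (i1,j2,k1) = x2 \<and> L (i2,j1,k1) = x2 \<and> L (i1,j1,k2) = x2 \<and> L (i2,j2,k2) = x2)"

definition swap3 :: "(cell \<Rightarrow> nat) \<Rightarrow> cell set \<Rightarrow> cell \<Rightarrow> nat" where
  "swap3 L C c = (if c \<in> C then (THE y. y \<in> L ` C \<and> y \<noteq> L c) else L c)"

definition allowed_3cube :: "nat \<Rightarrow> (cell \<Rightarrow> nat) \<Rightarrow> (cell \<Rightarrow> nat set) \<Rightarrow> cell set \<Rightarrow> bool" where
  "allowed_3cube n L A C \<longleftrightarrow> is_3cube n L C \<and> (\<forall>c\<in>C. swap3 L C c \<notin> A c)"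

definition transversal_set :: "nat \<Rightarrow> (cell \<Rightarrow> nat) \<Rightarrow> cell set \<Rightarrow> bool" where
  "transversal_set n L T \<longleftrightarrow> T \<subseteq> cells n \<and> card T = n \<and>
     (\<forall>c\<in>T. \<forall>d\<in>T. c \<noteq> d \<longrightarrow>
        \<not> (fst c = fst d \<and> snd (snd c) = snd (snd d)) \<and>
        \<not> (fst (snd c) = fst (snd d) \<and> snd (snd c) = snd (snd d)) \<and>
        \<not> (fst c = fst d \<and> fst (snd c) = fst (snd d)) \<and>
        L c \<noteq> L d \<and>
        (\<exists>!C. is_3cube n L C \<and> c \<in> C \<and> d \<in> C))"

end

theory Submission
  imports Defs
begin

(* Identify [n] with the group Z_2^t.  Then the relabelled Boolean cube satisfies
   L (\<tau>1 a, \<tau>2 b, \<tau>3 e) = \<tau>4 (a + b + e), the 3-cubes through a cell are obtained by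
   translating its three coordinates by a common d \<noteq> 0, and every transversal-set lies on a
   diagonal {(\<tau>1 (u + e), \<tau>2 (v + e), \<tau>3 e)}.

   Every event to be avoided (at least k conflicts on a line, a symbol-set or a diagonal, or too
   many d for which the 3-cube through a cell is spoiled at a given kind of corner) says that,
   once three of the four permutations are fixed, the remaining one \<pi> has many hits
   \<pi> (h x) \<in> S x, where h is injective and |S x| \<le> 2 g.  Choosing the hits shows that at most
   N! g^m / m! permutations of an N-set have m hits, so a union bound over the 7 n^2 conflict
   events and the 3 n^3 cube events, which is exactly the hypothesis, leaves a good relabelling.
   For (f), four of the eight corners of a cube spoil at most g of the n - 1 cubes each, because
   A is a (g,g,g,g)-cube; the face corner is counted with the threshold r + 1 - 2 g, which is
   admissible since g^(r+1-2g) / (r+1-2g)! \<le> (2 g)^r / r!. *)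

section \<open>The Boolean group on \<open>{1..2^t}\<close>\<close>

(* The addition of Z_2^t transported to {1..2^t} along x \<mapsto> x - 1, so that 1 is neutral
   and boolean_cube (i, j, k) = bxor (bxor i j) k. *)
definition bxor :: "nat \<Rightarrow> nat \<Rightarrow> nat" where
  "bxor x y = xor (x - 1) (y - 1) + 1"

lemma bxor_pos [simp]: "0 < bxor x y"
  by (simp add: bxor_def)

lemma bxor_commute: "bxor x y = bxor y x"
  by (simp add: bxor_def xor.commute)

lemma bxor_assoc: "bxor (bxor x y) z = bxor x (bxor y z)"
  by (simp add: bxor_def xor.assoc)

lemma bxor_left_commute: "bxor x (bxor y z) = bxor y (bxor x z)"
  by (simp add: bxor_def xor.left_commute)

lemmas bxor_ac = bxor_assoc bxor_commute bxor_left_commute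

lemma bxor_self [simp]: "bxor x x = 1"
  by (simp add: bxor_def)

lemma bxor_1_right [simp]: "0 < x \<Longrightarrow> bxor x (Suc 0) = x"
  by (simp add: bxor_def)

lemma bxor_1_left [simp]: "0 < x \<Longrightarrow> bxor (Suc 0) x = x"
  by (simp add: bxor_def)

lemma bxor_cancel_left [simp]: "0 < y \<Longrightarrow> bxor x (bxor x y) = y"
  by (simp add: bxor_def flip: xor.assoc)

lemma bxor_cancel_right [simp]: "0 < x \<Longrightarrow> bxor (bxor x y) y = x"
  by (simp add: bxor_def xor.assoc)

lemma bxor_left_inj: "0 < y \<Longrightarrow> 0 < y' \<Longrightarrow> bxor x y = bxor x y' \<longleftrightarrow> y = y'"
  by (metis bxor_cancel_left)

lemma bxor_right_inj: "0 < x \<Longrightarrow> 0 < x' \<Longrightarrow> bxor x y = bxor x' y \<longleftrightarrow> x = x'"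
  by (metis bxor_cancel_right)

lemma bxor_eq_1_iff: "0 < x \<Longrightarrow> 0 < y \<Longrightarrow> bxor x y = 1 \<longleftrightarrow> x = y"
  by (metis One_nat_def bxor_1_right bxor_cancel_left bxor_self)

lemma bxor_eq_self_iff: "0 < x \<Longrightarrow> 0 < d \<Longrightarrow> bxor x d = x \<longleftrightarrow> d = 1"
  by (metis One_nat_def bxor_1_right bxor_cancel_left bxor_self)

lemma inj_on_bxor: "inj_on (bxor c) {1..n}"
  by (intro inj_onI) (simp add: bxor_left_inj)

lemma bxor_less_pow2:
  assumes "x \<in> {1..2 ^ t}" "y \<in> {1..2 ^ t}"
  shows "bxor x y \<in> {1..2 ^ t}"
proof -
  have "take_bit t (x - 1) = x - 1" "take_bit t (y - 1) = y - 1"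
    using assms by (auto simp: take_bit_nat_eq_self_iff)
  then have "take_bit t (xor (x - 1) (y - 1)) = xor (x - 1) (y - 1)"
    by (simp add: take_bit_xor)
  then have "xor (x - 1) (y - 1) < 2 ^ t"
    by (metis take_bit_nat_less_exp)
  then show ?thesis
    by (simp add: bxor_def)
qed

lemma boolean_cube_eq: "boolean_cube (i, j, k) = bxor (bxor i j) k"
  by (simp add: boolean_cube_def bxor_def)

definition perms :: "nat \<Rightarrow> (nat \<Rightarrow> nat) set" where
  "perms n = {\<tau>. \<tau> permutes {1..n}}"

definition translate :: "(nat \<Rightarrow> nat) \<Rightarrow> nat \<Rightarrow> nat \<Rightarrow> nat" where
  "translate \<tau> d i = \<tau> (bxor (inv \<tau> i) d)"

locale boolean_order =
  fixes t n :: nat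
  assumes n_eq: "n = 2 ^ t"
begin

lemma n_ge_1: "n \<ge> 1"
  by (simp add: n_eq)

lemma bxor_closed: "x \<in> {1..n} \<Longrightarrow> y \<in> {1..n} \<Longrightarrow> bxor x y \<in> {1..n}"
  using bxor_less_pow2 n_eq by blast

context
  fixes \<tau> assumes \<tau>: "\<tau> \<in> perms n"
begin

lemma perm_in_range: "x \<in> {1..n} \<Longrightarrow> \<tau> x \<in> {1..n}"
  using \<tau> unfolding perms_def by (metis mem_Collect_eq permutes_in_image)

lemma inv_perm_in_range: "x \<in> {1..n} \<Longrightarrow> inv \<tau> x \<in> {1..n}"
  using \<tau> unfolding perms_def by (metis mem_Collect_eq permutes_in_image permutes_inv)

lemma inv_perm_apply [simp]: "inv \<tau> (\<tau> x) = x"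
  using \<tau> by (simp add: perms_def permutes_inverses)

lemma perm_apply_inv [simp]: "\<tau> (inv \<tau> x) = x"
  using \<tau> by (simp add: perms_def permutes_inverses)

lemma perm_eq_iff [simp]: "\<tau> x = \<tau> y \<longleftrightarrow> x = y"
  using \<tau> by (metis inv_perm_apply)

lemma inv_perm_eq_iff [simp]: "inv \<tau> x = inv \<tau> y \<longleftrightarrow> x = y"
  using \<tau> by (metis perm_apply_inv)

lemma inv_translate: "inv \<tau> (translate \<tau> d i) = bxor (inv \<tau> i) d"
  by (simp add: translate_def)

lemma translate_translate [simp]:
  "i \<in> {1..n} \<Longrightarrow> translate \<tau> d (translate \<tau> d i) = i"
  using inv_perm_in_range[of i] by (simp add: translate_def)

lemma translate_in_range: "i \<in> {1..n} \<Longrightarrow> d \<in> {1..n} \<Longrightarrow> translate \<tau> d i \<in> {1..n}"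
  unfolding translate_def by (intro perm_in_range bxor_closed inv_perm_in_range)

lemma translate_eq_self_iff:
  assumes "i \<in> {1..n}" "d \<in> {1..n}"
  shows "translate \<tau> d i = i \<longleftrightarrow> d = 1"
proof -
  have "translate \<tau> d i = i \<longleftrightarrow> \<tau> (bxor (inv \<tau> i) d) = \<tau> (inv \<tau> i)"
    by (simp add: translate_def)
  also have "\<dots> \<longleftrightarrow> bxor (inv \<tau> i) d = inv \<tau> i"
    by (rule perm_eq_iff)
  also have "\<dots> \<longleftrightarrow> d = 1"
    using inv_perm_in_range[OF assms(1)] assms(2) by (intro bxor_eq_self_iff) auto
  finally show ?thesis .
qed

lemma translate_neq: "i \<in> {1..n} \<Longrightarrow> d \<in> {1..n} - {1} \<Longrightarrow> translate \<tau> d i \<noteq> i"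
  using translate_eq_self_iff by blast

lemma translate_inj_on_shifts: "inj_on (\<lambda>d. translate \<tau> d i) {1..n}"
  by (intro inj_onI) (auto simp: translate_def bxor_left_inj)

lemma translate_pair_eq:
  "i \<in> {1..n} \<Longrightarrow> x \<in> {i, translate \<tau> d i} \<Longrightarrow> {x, translate \<tau> d x} = {i, translate \<tau> d i}"
  by auto

lemma inj_on_bxor_inv_perm: "inj_on (\<lambda>j. bxor (inv \<tau> j) c) {1..n}"
proof (rule inj_onI)
  fix x y assume xy: "x \<in> {1..n}" "y \<in> {1..n}" "bxor (inv \<tau> x) c = bxor (inv \<tau> y) c"
  have "0 < inv \<tau> x" "0 < inv \<tau> y"
    using inv_perm_in_range[OF xy(1)] inv_perm_in_range[OF xy(2)] by auto
  with xy(3) have "inv \<tau> x = inv \<tau> y"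
    using bxor_right_inj by blast
  then show "x = y"
    by simp
qed

end

end

section \<open>Counting permutations with many hits\<close>

lemma card_Un_le_add: "card A \<le> a \<Longrightarrow> card B \<le> b \<Longrightarrow> card (A \<union> B) \<le> a + b"
  using card_Un_le[of A B] by linarith

lemma card_Un_le_real: "real (card (X \<union> Y)) \<le> real (card X) + real (card Y)"
  using card_Un_le[of X Y] by linarith

lemma card_UN_le_real:
  assumes "finite I" "\<And>i. i \<in> I \<Longrightarrow> real (card (E i)) \<le> M"
  shows "real (card (\<Union>i\<in>I. E i)) \<le> real (card I) * M"
proof -
  have "real (card (\<Union>i\<in>I. E i)) \<le> (\<Sum>i\<in>I. real (card (E i)))"
    using card_UN_le[OF assms(1), of E] by (simp flip: of_nat_sum)
  also have "\<dots> \<le> (\<Sum>i\<in>I. M)"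
    using assms(2) by (rule sum_mono)
  finally show ?thesis
    by simp
qed

lemma le_card_mono: "r \<le> card X \<Longrightarrow> X \<subseteq> Y \<Longrightarrow> finite Y \<Longrightarrow> r \<le> card Y"
  using card_mono by (metis le_trans)

lemma card_le_real_bound:
  assumes "A \<subseteq> B" "finite B" "real (card B) \<le> M"
  shows "real (card A) \<le> M"
proof -
  have "real (card A) \<le> real (card B)"
    using card_mono[OF assms(2,1)] by simp
  then show ?thesis
    using assms(3) by linarith
qed

lemma card_permutes_sending_le:
  assumes "finite U" "p \<in> U" "v \<in> U"
  shows "card {\<tau>. \<tau> permutes U \<and> (\<forall>q\<in>K. \<tau> q \<in> S q) \<and> \<tau> p = v}
    \<le> card {\<tau>. \<tau> permutes (U - {p}) \<and> (\<forall>q\<in>K. \<tau> q \<in> transpose v p ` S q)}"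
    (is "card ?X \<le> card ?Y")
proof -
  let ?t = "transpose v p"
  have "inj_on ((\<circ>) ?t) ?X"
    by (rule inj_onI) (metis comp_assoc transpose_comp_involutory id_comp)
  then have "card ?X = card ((\<circ>) ?t ` ?X)"
    by (simp add: card_image)
  also have "\<dots> \<le> card ?Y"
  proof (rule card_mono)
    show "finite ?Y"
      using finite_permutations[of "U - {p}"] assms(1) by (auto intro: finite_subset[rotated])
    show "(\<circ>) ?t ` ?X \<subseteq> ?Y"
    proof
      fix \<sigma> assume "\<sigma> \<in> (\<circ>) ?t ` ?X"
      then obtain \<tau> where \<tau>: "\<tau> \<in> ?X" "\<sigma> = ?t \<circ> \<tau>"
        by auto
      have "\<sigma> permutes U" "\<sigma> p = p"
        using \<tau> assms(2,3) by (auto simp: permutes_compose permutes_swap_id)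
      then have "\<sigma> permutes (U - {p})"
        unfolding permutes_def by auto
      then show "\<sigma> \<in> ?Y"
        using \<tau> by auto
    qed
  qed
  finally show ?thesis .
qed

lemma card_permutes_constrained_le:
  assumes "finite U" "K \<subseteq> U" "\<And>q. q \<in> K \<Longrightarrow> finite (S q) \<and> card (S q) \<le> b q"
  shows "card {\<tau>. \<tau> permutes U \<and> (\<forall>q\<in>K. \<tau> q \<in> S q)} \<le> prod b K * fact (card U - card K)"
proof -
  have "finite K"
    using assms(1,2) finite_subset by blast
  then show ?thesis
    using assms
  proof (induction K arbitrary: U S rule: finite_induct)
    case empty
    then show ?case
      by (simp add: card_permutations)
  next
    case (insert p K)
    define X where "X v = {\<tau>. \<tau> permutes U \<and> (\<forall>q\<in>K. \<tau> q \<in> S q) \<and> \<tau> p = v}" for v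
    have p: "p \<in> U" and K: "K \<subseteq> U - {p}"
      using insert by auto
    have card_X: "card (X v) \<le> prod b K * fact (card U - 1 - card K)" if "v \<in> U" for v
    proof -
      have "card (X v) \<le> card {\<tau>. \<tau> permutes (U - {p}) \<and> (\<forall>q\<in>K. \<tau> q \<in> transpose v p ` S q)}"
        unfolding X_def using insert.prems(1) p that by (rule card_permutes_sending_le)
      also have "\<dots> \<le> prod b K * fact (card (U - {p}) - card K)"
        using insert.prems K by (intro insert.IH) (auto simp: card_image inj_transpose)
      finally show ?thesis
        using p insert.prems(1) by simp
    qed
    moreover have "finite (X v)" for v
      using finite_permutations[OF insert.prems(1)] by (rule finite_subset[rotated]) (auto simp: X_def)
    moreover have "{\<tau>. \<tau> permutes U \<and> (\<forall>q\<in>insert p K. \<tau> q \<in> S q)} \<subseteq> (\<Union>v\<in>S p \<inter> U. X v)"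
      unfolding X_def using permutes_in_image p by fastforce
    ultimately have "card {\<tau>. \<tau> permutes U \<and> (\<forall>q\<in>insert p K. \<tau> q \<in> S q)}
        \<le> (\<Sum>v\<in>S p \<inter> U. card (X v))"
      using insert.prems(1) by (intro order_trans[OF card_mono card_UN_le]) auto
    also have "\<dots> \<le> (\<Sum>v\<in>S p \<inter> U. prod b K * fact (card U - 1 - card K))"
      using card_X by (intro sum_mono) auto
    also have "\<dots> \<le> b p * (prod b K * fact (card U - 1 - card K))"
      using insert.prems(3)[of p] card_mono[of "S p" "S p \<inter> U"] by (simp add: mult_right_mono)
    also have "\<dots> = prod b (insert p K) * fact (card U - card (insert p K))"
      using insert.hyps by simp
    finally show ?case .
  qed
qed

lemma card_permutes_hitting_le:
  assumes U: "finite U" and F: "F \<subseteq> U"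
    and h: "inj_on h D" "h ` D \<subseteq> U - F"
    and S: "\<And>x. x \<in> D \<Longrightarrow> finite (S x) \<and> card (S x) \<le> g"
    and T: "\<And>q. q \<in> F \<Longrightarrow> finite (T q) \<and> card (T q) \<le> 1"
    and K: "K \<subseteq> D"
  shows "card {\<tau>. \<tau> permutes U \<and> (\<forall>q\<in>F. \<tau> q \<in> T q) \<and> (\<forall>x\<in>K. \<tau> (h x) \<in> S x)}
    \<le> g ^ card K * fact (card U - card F - card K)"
proof -
  define S' where "S' q = (if q \<in> F then T q else S (inv_into D h q))" for q
  have disj: "F \<inter> h ` K = {}"
    using h K by auto
  have "finite F" "finite K"
    using F U K h by (metis finite_Diff finite_image_iff finite_subset inj_on_subset)+
  have S': "S' q = T q" if "q \<in> F" for q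
    using that by (simp add: S'_def)
  have S'_h: "S' (h x) = S x" if "x \<in> K" for x
    using that K h disj by (auto simp: S'_def)
  have "{\<tau>. \<tau> permutes U \<and> (\<forall>q\<in>F. \<tau> q \<in> T q) \<and> (\<forall>x\<in>K. \<tau> (h x) \<in> S x)}
      \<subseteq> {\<tau>. \<tau> permutes U \<and> (\<forall>q\<in>F \<union> h ` K. \<tau> q \<in> S' q)}"
    using S' S'_h by auto
  then have "card {\<tau>. \<tau> permutes U \<and> (\<forall>q\<in>F. \<tau> q \<in> T q) \<and> (\<forall>x\<in>K. \<tau> (h x) \<in> S x)}
      \<le> card {\<tau>. \<tau> permutes U \<and> (\<forall>q\<in>F \<union> h ` K. \<tau> q \<in> S' q)}"
    using finite_permutations[OF U] by (intro card_mono) (auto intro: finite_subset[rotated])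
  also have "\<dots> \<le> prod (\<lambda>q. if q \<in> F then 1 else g) (F \<union> h ` K) * fact (card U - card (F \<union> h ` K))"
    using F h K S T by (intro card_permutes_constrained_le U) (auto simp: S'_def)
  also have "\<dots> = g ^ card K * fact (card U - card F - card K)"
  proof -
    have "(F \<union> h ` K) \<inter> - F = h ` K"
      using disj by blast
    moreover have "card (h ` K) = card K"
      using h K by (auto simp: card_image inj_on_subset)
    ultimately show ?thesis
      using disj \<open>finite F\<close> \<open>finite K\<close> by (simp add: card_Un_disjoint prod.If_cases)
  qed
  finally show ?thesis .
qed

(* Choose the k hits: at most (N choose k) g^k (N - k)! = N! g^k / k! permutations. *)
lemma card_permutes_many_hits_le:
  fixes h :: "'x \<Rightarrow> 'a" and F U :: "'a set"
  assumes U: "finite U" and F: "F \<subseteq> U"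
    and h: "inj_on h D" "h ` D \<subseteq> U - F"
    and S: "\<And>x. x \<in> D \<Longrightarrow> finite (S x) \<and> card (S x) \<le> g"
    and T: "\<And>q. q \<in> F \<Longrightarrow> finite (T q) \<and> card (T q) \<le> 1"
  shows "real (card {\<tau>. \<tau> permutes U \<and> (\<forall>q\<in>F. \<tau> q \<in> T q) \<and> k \<le> card {x\<in>D. \<tau> (h x) \<in> S x}})
    \<le> fact (card U - card F) * real g ^ k / fact k"
proof -
  let ?E = "{\<tau>. \<tau> permutes U \<and> (\<forall>q\<in>F. \<tau> q \<in> T q) \<and> k \<le> card {x\<in>D. \<tau> (h x) \<in> S x}}"
  let ?Y = "\<lambda>K. {\<tau>. \<tau> permutes U \<and> (\<forall>q\<in>F. \<tau> q \<in> T q) \<and> (\<forall>x\<in>K. \<tau> (h x) \<in> S x)}"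
  let ?N = "card U - card F"
  have finD: "finite D"
    using h U by (metis finite_Diff finite_image_iff finite_subset)
  have card_D: "card D \<le> ?N"
    using h U F by (metis card_Diff_subset card_image card_mono finite_Diff finite_subset)
  have "?E \<subseteq> (\<Union>K\<in>{K. K \<subseteq> D \<and> card K = k}. ?Y K)"
  proof
    fix \<tau> assume \<tau>: "\<tau> \<in> ?E"
    then obtain K where "K \<subseteq> {x\<in>D. \<tau> (h x) \<in> S x}" "card K = k"
      using obtain_subset_with_card_n by (metis (no_types, lifting) mem_Collect_eq)
    with \<tau> show "\<tau> \<in> (\<Union>K\<in>{K. K \<subseteq> D \<and> card K = k}. ?Y K)"
      by blast
  qed
  moreover have "finite (?Y K)" for K
    using finite_permutations[OF U] by (rule finite_subset[rotated]) auto
  moreover have card_Y: "card (?Y K) \<le> g ^ k * fact (?N - k)" if "K \<subseteq> D" "card K = k" for K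
    using card_permutes_hitting_le[OF U F h S T that(1)] that(2) by simp
  ultimately have "card ?E \<le> card (\<Union>K\<in>{K. K \<subseteq> D \<and> card K = k}. ?Y K)"
    using finD by (intro card_mono) auto
  also have "\<dots> \<le> (\<Sum>K\<in>{K. K \<subseteq> D \<and> card K = k}. card (?Y K))"
    using finD by (intro card_UN_le) simp
  also have "\<dots> \<le> (\<Sum>K\<in>{K. K \<subseteq> D \<and> card K = k}. g ^ k * fact (?N - k))"
    using card_Y by (intro sum_mono) auto
  also have "\<dots> = (card D choose k) * g ^ k * fact (?N - k)"
    using n_subsets[OF finD] by simp
  also have "\<dots> \<le> (?N choose k) * g ^ k * fact (?N - k)"
    using card_D by (intro mult_right_mono binomial_right_mono) auto
  finally have "real (card ?E) \<le> real ((?N choose k) * g ^ k * fact (?N - k))"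
    by (simp only: of_nat_le_iff)
  also have "\<dots> \<le> fact ?N * real g ^ k / fact k"
    by (cases "k \<le> ?N") (simp_all add: binomial_fact binomial_eq_0)
  finally show ?thesis .
qed

lemma finite_perms [simp]: "finite (perms n)"
  unfolding perms_def by (rule finite_permutations) simp

lemma card_perms: "card (perms n) = fact n"
  unfolding perms_def by (simp add: card_permutations)

lemma card_perms_many_hits_le:
  assumes "inj_on h D" "h ` D \<subseteq> {1..n}" "\<And>x. x \<in> D \<Longrightarrow> finite (S x) \<and> card (S x) \<le> g"
  shows "real (card {\<tau>\<in>perms n. k \<le> card {x\<in>D. \<tau> (h x) \<in> S x}}) \<le> fact n * real g ^ k / fact k"
  using card_permutes_many_hits_le[of "{1..n}" "{}" h D S g "\<lambda>_. {}" k] assms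
  by (simp add: perms_def)

lemma card_perms_fixing_many_hits_le:
  assumes "e \<in> {1..n}" "inj_on h D" "h ` D \<subseteq> {1..n} - {e}"
    "\<And>x. x \<in> D \<Longrightarrow> finite (S x) \<and> card (S x) \<le> g"
  shows "real (card {\<tau>\<in>perms n. \<tau> e = c \<and> k \<le> card {x\<in>D. \<tau> (h x) \<in> S x}})
    \<le> fact (n - 1) * real g ^ k / fact k"
proof -
  have "{\<tau>\<in>perms n. \<tau> e = c \<and> k \<le> card {x\<in>D. \<tau> (h x) \<in> S x}}
      = {\<tau>. \<tau> permutes {1..n} \<and> (\<forall>q\<in>{e}. \<tau> q \<in> {c}) \<and> k \<le> card {x\<in>D. \<tau> (h x) \<in> S x}}"
    by (auto simp: perms_def)
  then show ?thesis
    using card_permutes_many_hits_le[of "{1..n}" "{e}" h D S g "\<lambda>_. {c}" k] assms by simp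
qed

section \<open>Estimates for \<open>x ^ r / r!\<close>\<close>

lemma fact_le_half_succ_power: "fact r \<le> ((real r + 1) / 2) ^ r"
proof (induction r)
  case 0
  then show ?case by simp
next
  case (Suc r)
  have "1 + 1 / (real r + 1) = (real r + 2) / (real r + 1)"
    by (simp add: field_simps)
  then have "(real r + 2) ^ (r + 1) = (real r + 1) ^ (r + 1) * (1 + 1 / (real r + 1)) ^ (r + 1)"
    by (simp add: power_divide)
  also have "\<dots> \<ge> (real r + 1) ^ (r + 1) * 2"
    using Bernoulli_inequality[of "1 / (real r + 1)" "r + 1"]
    by (intro mult_left_mono) (simp_all add: field_simps)
  finally have "2 * (real r + 1) ^ (r + 1) \<le> (real r + 2) ^ (r + 1)"
    by simp
  have "fact (Suc r) = (real r + 1) * fact r"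
    by simp
  also have "\<dots> \<le> (real r + 1) * ((real r + 1) / 2) ^ r"
    using Suc by (intro mult_left_mono) auto
  also have "\<dots> = 2 * (real r + 1) ^ (r + 1) / 2 ^ (r + 1)"
    by (simp add: power_divide field_simps)
  also have "\<dots> \<le> (real r + 2) ^ (r + 1) / 2 ^ (r + 1)"
    using \<open>2 * (real r + 1) ^ (r + 1) \<le> _\<close> by (intro divide_right_mono) auto
  also have "\<dots> = ((real (Suc r) + 1) / 2) ^ Suc r"
    by (simp add: power_divide add.commute)
  finally show ?case .
qed

lemma four_mult_le_if_power_div_fact_less_1:
  fixes g r :: nat
  assumes "g \<ge> 1" "(2 * real g) ^ r / fact r < 1"
  shows "4 * g \<le> r"
proof (rule ccontr)
  assume "\<not> 4 * g \<le> r"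
  then have "((real r + 1) / 2) ^ r \<le> (2 * real g) ^ r"
    by (intro power_mono) auto
  then have "fact r \<le> (2 * real g) ^ r"
    using fact_le_half_succ_power[of r] by linarith
  with assms(2) show False
    by (simp add: divide_less_eq)
qed

lemma succ_power_le_twice_power:
  fixes r j :: nat
  assumes "2 * j \<le> r + 1"
  shows "(real r + 1) ^ j \<le> 2 * real r ^ j"
proof -
  have "1 / 2 \<le> 1 + real j * (- 1 / (real r + 1))"
    using assms by (simp add: field_simps)
  also have "\<dots> \<le> (1 + - 1 / (real r + 1)) ^ j"
    by (intro Bernoulli_inequality) (simp add: field_simps)
  also have "\<dots> = real r ^ j / (real r + 1) ^ j"
    by (simp add: field_simps power_divide)
  finally show ?thesis
    by (simp add: field_simps)
qed

lemma power_le_two_power_mult_power: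
  fixes g r :: nat
  assumes "4 * g \<le> r"
  shows "r ^ (2 * g) \<le> 2 ^ r * g ^ (2 * g)"
  using assms
proof (induction r rule: dec_induct)
  case base
  have "(4 * g) ^ (2 * g) = (2 ^ 2) ^ (2 * g) * g ^ (2 * g)"
    by (simp add: power_mult_distrib)
  also have "(2 ^ 2) ^ (2 * g) = (2::nat) ^ (4 * g)"
    by (simp only: power_mult[symmetric]) simp
  finally show ?case
    by (rule eq_imp_le)
next
  case (step r)
  have "real (Suc r ^ (2 * g)) \<le> 2 * real (r ^ (2 * g))"
    using succ_power_le_twice_power[of "2 * g" r] step.hyps by (simp add: add.commute)
  also have "\<dots> \<le> 2 * real (2 ^ r * g ^ (2 * g))"
    using step.IH by (simp only: of_nat_le_iff mult_le_cancel_left_pos zero_less_numeral)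
  also have "\<dots> = real (2 ^ Suc r * g ^ (2 * g))"
    by simp
  finally show ?case
    by (simp only: of_nat_le_iff)
qed

lemma power_pred_le_two_power_mult_power:
  fixes g r :: nat
  assumes "4 * g \<le> r" "0 < g"
  shows "r ^ (2 * g - 1) \<le> 2 ^ r * g ^ (2 * g - 1)"
proof -
  have "g * r ^ (2 * g - 1) \<le> r * r ^ (2 * g - 1)"
    using assms(1) by (intro mult_right_mono) auto
  also have "\<dots> = r ^ (2 * g)"
    using assms(2) by (simp add: power_eq_if)
  also have "\<dots> \<le> 2 ^ r * g ^ (2 * g)"
    using assms(1) by (rule power_le_two_power_mult_power)
  also have "\<dots> = g * (2 ^ r * g ^ (2 * g - 1))"
    using assms(2) by (simp add: power_eq_if)
  finally show ?thesis
    using assms(2) by simp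
qed

lemma power_div_fact_le_if_less_1:
  fixes g r :: nat
  assumes "(2 * real g) ^ r / fact r < 1"
  shows "real g ^ (r + 1 - 2 * g) / fact (r + 1 - 2 * g) \<le> (2 * real g) ^ r / fact r"
proof (cases "g = 0")
  case True
  then show ?thesis by simp
next
  case False
  have r: "4 * g \<le> r"
    using False assms by (intro four_mult_le_if_power_div_fact_less_1) auto
  define m where "m = r + 1 - 2 * g"
  have m: "r - (2 * g - 1) = m" "m \<le> r" "m + (2 * g - 1) = r"
    using r False by (auto simp: m_def)
  have "fact r div fact m \<le> r ^ (2 * g - 1)"
    using fact_div_fact_le_pow[of "2 * g - 1" r] r m(1) by simp
  then have "fact r \<le> r ^ (2 * g - 1) * (fact m :: nat)"
    using fact_dvd[OF m(2)] by (metis dvd_div_mult_self mult_le_mono1)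
  also have "\<dots> \<le> 2 ^ r * g ^ (2 * g - 1) * fact m"
    using power_pred_le_two_power_mult_power[OF r] False by simp
  finally have "g ^ m * fact r \<le> g ^ m * (2 ^ r * g ^ (2 * g - 1) * fact m)"
    by simp
  also have "\<dots> = (2 * g) ^ r * fact m"
    using m(3) by (simp add: power_mult_distrib flip: power_add)
  finally have "real (g ^ m * fact r) \<le> real ((2 * g) ^ r * fact m)"
    by (simp only: of_nat_le_iff)
  then have "real g ^ m * fact r \<le> (2 * real g) ^ r * fact m"
    by simp
  then show ?thesis
    unfolding m_def[symmetric] by (simp add: divide_le_eq field_simps)
qed

section \<open>Quadruples of permutations\<close>

type_synonym quad = "(nat \<Rightarrow> nat) \<times> (nat \<Rightarrow> nat) \<times> (nat \<Rightarrow> nat) \<times> (nat \<Rightarrow> nat)"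

definition quads :: "nat \<Rightarrow> quad set" where
  "quads n = perms n \<times> perms n \<times> perms n \<times> perms n"

lemma finite_quads [simp]: "finite (quads n)"
  by (simp add: quads_def)

lemma card_quads: "card (quads n) = fact n ^ 4"
  by (simp add: quads_def card_cartesian_product card_perms power4_eq_xxxx)

lemma card_quads_le_fiber4:
  assumes "\<And>\<tau>1 \<tau>2 \<tau>3. \<tau>1 \<in> perms n \<Longrightarrow> \<tau>2 \<in> perms n \<Longrightarrow> \<tau>3 \<in> perms n \<Longrightarrow>
    real (card {\<tau>4\<in>perms n. Q (\<tau>1, \<tau>2, \<tau>3, \<tau>4)}) \<le> M"
  shows "real (card {\<sigma>\<in>quads n. Q \<sigma>}) \<le> fact n ^ 3 * M"
proof -
  let ?P = "perms n"
  have "{\<sigma>\<in>quads n. Q \<sigma>} = Sigma ?P (\<lambda>\<tau>1. Sigma ?P (\<lambda>\<tau>2. Sigma ?P (\<lambda>\<tau>3. {\<tau>4\<in>?P. Q (\<tau>1, \<tau>2, \<tau>3, \<tau>4)})))"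
    by (auto simp: quads_def)
  then have "real (card {\<sigma>\<in>quads n. Q \<sigma>})
      = (\<Sum>\<tau>1\<in>?P. \<Sum>\<tau>2\<in>?P. \<Sum>\<tau>3\<in>?P. real (card {\<tau>4\<in>?P. Q (\<tau>1, \<tau>2, \<tau>3, \<tau>4)}))"
    by (simp add: card_SigmaI)
  also have "\<dots> \<le> (\<Sum>\<tau>1\<in>?P. \<Sum>\<tau>2\<in>?P. \<Sum>\<tau>3\<in>?P. M)"
    using assms by (intro sum_mono) auto
  also have "\<dots> = fact n ^ 3 * M"
    by (simp add: card_perms power3_eq_cube)
  finally show ?thesis .
qed

lemma card_filter_bij_eq:
  assumes "bij_betw f X X"
  shows "card {x\<in>X. Q x} = card {x\<in>X. Q (f x)}"
proof -
  have "{x\<in>X. Q x} = f ` {x\<in>X. Q (f x)}"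
    using assms unfolding bij_betw_def by force
  moreover have "inj_on f {x\<in>X. Q (f x)}"
    using assms by (auto simp: bij_betw_def intro: inj_on_subset)
  ultimately show ?thesis
    by (simp add: card_image)
qed

lemma card_quads_le_fiber3:
  assumes "\<And>\<tau>1 \<tau>2 \<tau>4. \<tau>1 \<in> perms n \<Longrightarrow> \<tau>2 \<in> perms n \<Longrightarrow> \<tau>4 \<in> perms n \<Longrightarrow>
    real (card {\<tau>3\<in>perms n. Q (\<tau>1, \<tau>2, \<tau>3, \<tau>4)}) \<le> M"
  shows "real (card {\<sigma>\<in>quads n. Q \<sigma>}) \<le> fact n ^ 3 * M"
proof -
  let ?f = "\<lambda>(\<tau>1, \<tau>2, \<tau>3, \<tau>4). (\<tau>1, \<tau>2, \<tau>4, \<tau>3)"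
  have "bij_betw ?f (quads n) (quads n)"
    by (rule bij_betw_byWitness[where f' = ?f]) (auto simp: quads_def)
  then have "card {\<sigma>\<in>quads n. Q \<sigma>} = card {\<sigma>\<in>quads n. Q (?f \<sigma>)}"
    by (rule card_filter_bij_eq)
  also have "real \<dots> \<le> fact n ^ 3 * M"
    using assms by (intro card_quads_le_fiber4) simp
  finally show ?thesis .
qed

lemma card_quads_le_fiber2:
  assumes "\<And>\<tau>1 \<tau>3 \<tau>4. \<tau>1 \<in> perms n \<Longrightarrow> \<tau>3 \<in> perms n \<Longrightarrow> \<tau>4 \<in> perms n \<Longrightarrow>
    real (card {\<tau>2\<in>perms n. Q (\<tau>1, \<tau>2, \<tau>3, \<tau>4)}) \<le> M"
  shows "real (card {\<sigma>\<in>quads n. Q \<sigma>}) \<le> fact n ^ 3 * M"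
proof -
  let ?f = "\<lambda>(\<tau>1, \<tau>2, \<tau>3, \<tau>4). (\<tau>1, \<tau>4, \<tau>3, \<tau>2)"
  have "bij_betw ?f (quads n) (quads n)"
    by (rule bij_betw_byWitness[where f' = ?f]) (auto simp: quads_def)
  then have "card {\<sigma>\<in>quads n. Q \<sigma>} = card {\<sigma>\<in>quads n. Q (?f \<sigma>)}"
    by (rule card_filter_bij_eq)
  also have "real \<dots> \<le> fact n ^ 3 * M"
    using assms by (intro card_quads_le_fiber4) simp
  finally show ?thesis .
qed

lemma quads_filter_mono:
  assumes "\<And>\<tau>1 \<tau>2 \<tau>3 \<tau>4. (\<tau>1, \<tau>2, \<tau>3, \<tau>4) \<in> quads n \<Longrightarrow> P (\<tau>1, \<tau>2, \<tau>3, \<tau>4) \<Longrightarrow> Q \<tau>1 \<tau>2 \<tau>3 \<tau>4"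
  shows "{\<sigma>\<in>quads n. P \<sigma>} \<subseteq> {\<sigma>\<in>quads n. case \<sigma> of (\<tau>1, \<tau>2, \<tau>3, \<tau>4) \<Rightarrow> Q \<tau>1 \<tau>2 \<tau>3 \<tau>4}"
  using assms by auto

context boolean_order
begin

lemma card_quads_hits4_le:
  assumes "\<And>\<tau>1 \<tau>2 \<tau>3. \<tau>1 \<in> perms n \<Longrightarrow> \<tau>2 \<in> perms n \<Longrightarrow> \<tau>3 \<in> perms n \<Longrightarrow>
    inj_on (h \<tau>1 \<tau>2 \<tau>3) D \<and> h \<tau>1 \<tau>2 \<tau>3 ` D \<subseteq> {1..n} \<and>
    (\<forall>x\<in>D. finite (S \<tau>1 \<tau>2 \<tau>3 x) \<and> card (S \<tau>1 \<tau>2 \<tau>3 x) \<le> g)"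
  shows "real (card {\<sigma>\<in>quads n. case \<sigma> of (\<tau>1, \<tau>2, \<tau>3, \<tau>4) \<Rightarrow>
      m \<le> card {x\<in>D. \<tau>4 (h \<tau>1 \<tau>2 \<tau>3 x) \<in> S \<tau>1 \<tau>2 \<tau>3 x}}) \<le> fact n ^ 4 * real g ^ m / fact m"
proof -
  have "real (card {\<sigma>\<in>quads n. case \<sigma> of (\<tau>1, \<tau>2, \<tau>3, \<tau>4) \<Rightarrow>
      m \<le> card {x\<in>D. \<tau>4 (h \<tau>1 \<tau>2 \<tau>3 x) \<in> S \<tau>1 \<tau>2 \<tau>3 x}}) \<le> fact n ^ 3 * (fact n * real g ^ m / fact m)"
    using assms by (intro card_quads_le_fiber4) (simp only: prod.case, intro card_perms_many_hits_le; blast)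
  then show ?thesis
    by (simp add: eval_nat_numeral mult.assoc)
qed

lemma card_quads_hits3_le:
  assumes "\<And>\<tau>1 \<tau>2 \<tau>4. \<tau>1 \<in> perms n \<Longrightarrow> \<tau>2 \<in> perms n \<Longrightarrow> \<tau>4 \<in> perms n \<Longrightarrow>
    inj_on (h \<tau>1 \<tau>2 \<tau>4) D \<and> h \<tau>1 \<tau>2 \<tau>4 ` D \<subseteq> {1..n} \<and>
    (\<forall>x\<in>D. finite (S \<tau>1 \<tau>2 \<tau>4 x) \<and> card (S \<tau>1 \<tau>2 \<tau>4 x) \<le> g)"
  shows "real (card {\<sigma>\<in>quads n. case \<sigma> of (\<tau>1, \<tau>2, \<tau>3, \<tau>4) \<Rightarrow>
      m \<le> card {x\<in>D. \<tau>3 (h \<tau>1 \<tau>2 \<tau>4 x) \<in> S \<tau>1 \<tau>2 \<tau>4 x}}) \<le> fact n ^ 4 * real g ^ m / fact m"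
proof -
  have "real (card {\<sigma>\<in>quads n. case \<sigma> of (\<tau>1, \<tau>2, \<tau>3, \<tau>4) \<Rightarrow>
      m \<le> card {x\<in>D. \<tau>3 (h \<tau>1 \<tau>2 \<tau>4 x) \<in> S \<tau>1 \<tau>2 \<tau>4 x}}) \<le> fact n ^ 3 * (fact n * real g ^ m / fact m)"
    using assms by (intro card_quads_le_fiber3) (simp only: prod.case, intro card_perms_many_hits_le; blast)
  then show ?thesis
    by (simp add: eval_nat_numeral mult.assoc)
qed

lemma card_quads_hits2_le:
  assumes "\<And>\<tau>1 \<tau>3 \<tau>4. \<tau>1 \<in> perms n \<Longrightarrow> \<tau>3 \<in> perms n \<Longrightarrow> \<tau>4 \<in> perms n \<Longrightarrow>
    inj_on (h \<tau>1 \<tau>3 \<tau>4) D \<and> h \<tau>1 \<tau>3 \<tau>4 ` D \<subseteq> {1..n} \<and>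
    (\<forall>x\<in>D. finite (S \<tau>1 \<tau>3 \<tau>4 x) \<and> card (S \<tau>1 \<tau>3 \<tau>4 x) \<le> g)"
  shows "real (card {\<sigma>\<in>quads n. case \<sigma> of (\<tau>1, \<tau>2, \<tau>3, \<tau>4) \<Rightarrow>
      m \<le> card {x\<in>D. \<tau>2 (h \<tau>1 \<tau>3 \<tau>4 x) \<in> S \<tau>1 \<tau>3 \<tau>4 x}}) \<le> fact n ^ 4 * real g ^ m / fact m"
proof -
  have "real (card {\<sigma>\<in>quads n. case \<sigma> of (\<tau>1, \<tau>2, \<tau>3, \<tau>4) \<Rightarrow>
      m \<le> card {x\<in>D. \<tau>2 (h \<tau>1 \<tau>3 \<tau>4 x) \<in> S \<tau>1 \<tau>3 \<tau>4 x}}) \<le> fact n ^ 3 * (fact n * real g ^ m / fact m)"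
    using assms by (intro card_quads_le_fiber2) (simp only: prod.case, intro card_perms_many_hits_le; blast)
  then show ?thesis
    by (simp add: eval_nat_numeral mult.assoc)
qed

lemma card_quads_pointed_hits3_le:
  assumes "e \<in> {1..n}" "\<And>\<tau>1 \<tau>2 \<tau>4. \<tau>1 \<in> perms n \<Longrightarrow> \<tau>2 \<in> perms n \<Longrightarrow> \<tau>4 \<in> perms n \<Longrightarrow>
    inj_on (h \<tau>1 \<tau>2 \<tau>4) D \<and> h \<tau>1 \<tau>2 \<tau>4 ` D \<subseteq> {1..n} - {e} \<and>
    (\<forall>x\<in>D. finite (S \<tau>1 \<tau>2 \<tau>4 x) \<and> card (S \<tau>1 \<tau>2 \<tau>4 x) \<le> g)"
  shows "real (card {\<sigma>\<in>quads n. case \<sigma> of (\<tau>1, \<tau>2, \<tau>3, \<tau>4) \<Rightarrow>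
      \<tau>3 e = c \<and> m \<le> card {x\<in>D. \<tau>3 (h \<tau>1 \<tau>2 \<tau>4 x) \<in> S \<tau>1 \<tau>2 \<tau>4 x}})
    \<le> fact n ^ 3 * fact (n - 1) * real g ^ m / fact m"
proof -
  have "real (card {\<sigma>\<in>quads n. case \<sigma> of (\<tau>1, \<tau>2, \<tau>3, \<tau>4) \<Rightarrow>
      \<tau>3 e = c \<and> m \<le> card {x\<in>D. \<tau>3 (h \<tau>1 \<tau>2 \<tau>4 x) \<in> S \<tau>1 \<tau>2 \<tau>4 x}})
      \<le> fact n ^ 3 * (fact (n - 1) * real g ^ m / fact m)"
    using assms by (intro card_quads_le_fiber3) (simp only: prod.case, intro card_perms_fixing_many_hits_le; blast)
  then show ?thesis
    by (simp add: mult.assoc)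
qed

end

section \<open>3-cubes and transversal-sets of a relabelled Boolean cube\<close>

definition latin :: "quad \<Rightarrow> cell \<Rightarrow> nat" where
  "latin \<sigma> = (case \<sigma> of (\<tau>1, \<tau>2, \<tau>3, \<tau>4) \<Rightarrow> apply_sigma \<tau>1 \<tau>2 \<tau>3 \<tau>4 boolean_cube)"

lemma latin_apply:
  "latin (\<tau>1, \<tau>2, \<tau>3, \<tau>4) (i, j, k) = \<tau>4 (bxor (bxor (inv \<tau>1 i) (inv \<tau>2 j)) (inv \<tau>3 k))"
  by (simp add: latin_def apply_sigma_def boolean_cube_eq)

fun cube_at :: "quad \<Rightarrow> cell \<Rightarrow> nat \<Rightarrow> cell set" where
  "cube_at (\<tau>1, \<tau>2, \<tau>3, _) (i, j, k) d =
     {i, translate \<tau>1 d i} \<times> {j, translate \<tau>2 d j} \<times> {k, translate \<tau>3 d k}"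

fun corner :: "quad \<Rightarrow> cell \<Rightarrow> nat \<Rightarrow> bool \<times> bool \<times> bool \<Rightarrow> cell" where
  "corner (\<tau>1, \<tau>2, \<tau>3, _) (i, j, k) d (p1, p2, p3) =
     (if p1 then translate \<tau>1 d i else i, if p2 then translate \<tau>2 d j else j,
      if p3 then translate \<tau>3 d k else k)"

lemma cube_at_eq_range_corner: "cube_at \<sigma> c d = range (corner \<sigma> c d)"
proof -
  obtain \<tau>1 \<tau>2 \<tau>3 \<tau>4 i j k where \<sigma>: "\<sigma> = (\<tau>1, \<tau>2, \<tau>3, \<tau>4)" and c: "c = (i, j, k)"
    by (cases \<sigma>; cases c) auto
  have "y = corner \<sigma> c d (fst y \<noteq> i, fst (snd y) \<noteq> j, snd (snd y) \<noteq> k)" if "y \<in> cube_at \<sigma> c d" for y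
    using that by (auto simp: \<sigma> c)
  moreover have "corner \<sigma> c d p \<in> cube_at \<sigma> c d" for p
    by (cases p) (simp add: \<sigma> c)
  ultimately show ?thesis
    by blast
qed

fun diagonal :: "nat \<Rightarrow> quad \<Rightarrow> nat \<Rightarrow> nat \<Rightarrow> cell set" where
  "diagonal n (\<tau>1, \<tau>2, \<tau>3, _) u v = (\<lambda>e. (\<tau>1 (bxor u e), \<tau>2 (bxor v e), \<tau>3 e)) ` {1..n}"

(* The shifts d for which the swap on the 3-cube through c conflicts with A at one of the
   corners in P; a corner is given by the coordinates that are translated. *)
fun defects :: "nat \<Rightarrow> (cell \<Rightarrow> nat set) \<Rightarrow> quad \<Rightarrow> cell \<Rightarrow> (bool \<times> bool \<times> bool) set \<Rightarrow> nat set" where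
  "defects n A (\<tau>1, \<tau>2, \<tau>3, \<tau>4) c P = {d \<in> {1..n} - {1}. \<exists>p\<in>P.
     translate \<tau>4 d (latin (\<tau>1, \<tau>2, \<tau>3, \<tau>4) (corner (\<tau>1, \<tau>2, \<tau>3, \<tau>4) c d p))
       \<in> A (corner (\<tau>1, \<tau>2, \<tau>3, \<tau>4) c d p)}"

lemma defects_Un: "defects n A \<sigma> c (P \<union> Q) = defects n A \<sigma> c P \<union> defects n A \<sigma> c Q"
  by (cases \<sigma>) auto

lemma card_conflicts_row_le:
  "card (conflicts n L A \<inter> {(i, j', k) | j'. j' \<in> {1..n}}) \<le> card {j\<in>{1..n}. L (i, j, k) \<in> A (i, j, k)}"
proof -
  have "conflicts n L A \<inter> {(i, j', k) | j'. j' \<in> {1..n}} \<subseteq> (\<lambda>j. (i, j, k)) ` {j\<in>{1..n}. L (i, j, k) \<in> A (i, j, k)}"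
    by (auto simp: conflicts_def)
  then show ?thesis
    by (rule surj_card_le[rotated]) simp
qed

lemma card_conflicts_column_le:
  "card (conflicts n L A \<inter> {(i', j, k) | i'. i' \<in> {1..n}}) \<le> card {i\<in>{1..n}. L (i, j, k) \<in> A (i, j, k)}"
proof -
  have "conflicts n L A \<inter> {(i', j, k) | i'. i' \<in> {1..n}} \<subseteq> (\<lambda>i. (i, j, k)) ` {i\<in>{1..n}. L (i, j, k) \<in> A (i, j, k)}"
    by (auto simp: conflicts_def)
  then show ?thesis
    by (rule surj_card_le[rotated]) simp
qed

lemma card_conflicts_file_le:
  "card (conflicts n L A \<inter> {(i, j, k') | k'. k' \<in> {1..n}}) \<le> card {k\<in>{1..n}. L (i, j, k) \<in> A (i, j, k)}"
proof -
  have "conflicts n L A \<inter> {(i, j, k') | k'. k' \<in> {1..n}} \<subseteq> (\<lambda>k. (i, j, k)) ` {k\<in>{1..n}. L (i, j, k) \<in> A (i, j, k)}"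
    by (auto simp: conflicts_def)
  then show ?thesis
    by (rule surj_card_le[rotated]) simp
qed

lemma mcube_cell: "mcube n g A \<Longrightarrow> c \<in> cells n \<Longrightarrow> finite (A c) \<and> card (A c) \<le> g"
  unfolding mcube_def by (meson finite_atLeastAtMost finite_subset)

lemma mcube_column:
  "mcube n g A \<Longrightarrow> j \<in> {1..n} \<Longrightarrow> k \<in> {1..n} \<Longrightarrow> card {i\<in>{1..n}. s \<in> A (i, j, k)} \<le> g"
  unfolding mcube_def by blast

lemma mcube_row:
  "mcube n g A \<Longrightarrow> i \<in> {1..n} \<Longrightarrow> k \<in> {1..n} \<Longrightarrow> card {j\<in>{1..n}. s \<in> A (i, j, k)} \<le> g"
  unfolding mcube_def by blast

lemma mcube_file:
  "mcube n g A \<Longrightarrow> i \<in> {1..n} \<Longrightarrow> j \<in> {1..n} \<Longrightarrow> card {k\<in>{1..n}. s \<in> A (i, j, k)} \<le> g"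
  unfolding mcube_def by blast

locale relabelling = boolean_order +
  fixes \<tau>1 \<tau>2 \<tau>3 \<tau>4 :: "nat \<Rightarrow> nat"
  assumes perms: "\<tau>1 \<in> perms n" "\<tau>2 \<in> perms n" "\<tau>3 \<in> perms n" "\<tau>4 \<in> perms n"
begin

abbreviation "\<sigma> \<equiv> (\<tau>1, \<tau>2, \<tau>3, \<tau>4)"

abbreviation "L \<equiv> latin \<sigma>"

lemmas [simp] = perms inv_translate[OF perms(1)] inv_translate[OF perms(2)]
  inv_translate[OF perms(3)] inv_translate[OF perms(4)]

lemma L_translate:
  "L (translate \<tau>1 d i, j, k) = translate \<tau>4 d (L (i, j, k))"
  "L (i, translate \<tau>2 d j, k) = translate \<tau>4 d (L (i, j, k))"
  "L (i, j, translate \<tau>3 d k) = translate \<tau>4 d (L (i, j, k))"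
  by (simp_all add: latin_apply translate_def bxor_ac)

lemma L_in_range:
  assumes "c \<in> cells n"
  shows "L c \<in> {1..n}"
proof -
  obtain i j k where c: "c = (i, j, k)" "i \<in> {1..n}" "j \<in> {1..n}" "k \<in> {1..n}"
    using assms unfolding cells_def by blast
  show ?thesis
    unfolding c latin_apply by (intro perm_in_range[OF perms(4)] bxor_closed inv_perm_in_range perms c)
qed

lemma inv_L: "inv \<tau>4 (L (i, j, k)) = bxor (bxor (inv \<tau>1 i) (inv \<tau>2 j)) (inv \<tau>3 k)"
  by (simp add: latin_apply)

lemma cube_at_subset_cells:
  assumes "(i, j, k) \<in> cells n" "d \<in> {1..n}"
  shows "cube_at \<sigma> (i, j, k) d \<subseteq> cells n"
  using assms translate_in_range[OF perms(1)] translate_in_range[OF perms(2)]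
    translate_in_range[OF perms(3)]
  by (auto simp: cells_def)

lemma cube_at_recenter:
  assumes "(i, j, k) \<in> cells n" "y \<in> cube_at \<sigma> (i, j, k) d"
  shows "cube_at \<sigma> y d = cube_at \<sigma> (i, j, k) d"
proof -
  obtain x1 x2 x3 where y: "y = (x1, x2, x3)"
    by (cases y) auto
  have ijk: "i \<in> {1..n}" "j \<in> {1..n}" "k \<in> {1..n}"
    using assms(1) by (auto simp: cells_def)
  have x: "x1 \<in> {i, translate \<tau>1 d i}" "x2 \<in> {j, translate \<tau>2 d j}" "x3 \<in> {k, translate \<tau>3 d k}"
    using assms(2) by (auto simp: y)
  have "{x1, translate \<tau>1 d x1} = {i, translate \<tau>1 d i}"
    "{x2, translate \<tau>2 d x2} = {j, translate \<tau>2 d j}"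
    "{x3, translate \<tau>3 d x3} = {k, translate \<tau>3 d k}"
    using translate_pair_eq[OF perms(1) ijk(1) x(1)] translate_pair_eq[OF perms(2) ijk(2) x(2)]
      translate_pair_eq[OF perms(3) ijk(3) x(3)] .
  then show ?thesis
    by (simp only: y cube_at.simps)
qed

lemma L_image_cube_at:
  assumes "(i, j, k) \<in> cells n"
  shows "L ` cube_at \<sigma> (i, j, k) d = {L (i, j, k), translate \<tau>4 d (L (i, j, k))}"
proof -
  have "translate \<tau>4 d (translate \<tau>4 d (L (i, j, k))) = L (i, j, k)"
    using L_in_range[OF assms] by (rule translate_translate[OF perms(4)])
  then show ?thesis
    by (auto simp: L_translate)
qed

lemma translate_L_neq:
  assumes "c \<in> cells n" "d \<in> {1..n} - {1}"
  shows "translate \<tau>4 d (L c) \<noteq> L c"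
  using translate_neq[OF perms(4) L_in_range[OF assms(1)] assms(2)] .

lemma swap3_cube_at:
  assumes "(i, j, k) \<in> cells n" "d \<in> {1..n} - {1}" "y \<in> cube_at \<sigma> (i, j, k) d"
  shows "swap3 L (cube_at \<sigma> (i, j, k) d) y = translate \<tau>4 d (L y)"
proof -
  obtain y1 y2 y3 where y: "y = (y1, y2, y3)"
    by (cases y) auto
  have "y \<in> cells n"
    using cube_at_subset_cells assms by auto
  then have "L ` cube_at \<sigma> (i, j, k) d = {L y, translate \<tau>4 d (L y)}"
    using cube_at_recenter[OF assms(1,3)] L_image_cube_at by (metis y)
  moreover have "translate \<tau>4 d (L y) \<noteq> L y"
    using translate_L_neq \<open>y \<in> cells n\<close> assms(2) by blast
  ultimately have "(THE z. z \<in> L ` cube_at \<sigma> (i, j, k) d \<and> z \<noteq> L y) = translate \<tau>4 d (L y)"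
    by (intro the_equality) auto
  then show ?thesis
    using assms(3) by (simp add: swap3_def)
qed

lemma is_3cube_cube_at:
  assumes "(i, j, k) \<in> cells n" "d \<in> {1..n} - {1}"
  shows "is_3cube n L (cube_at \<sigma> (i, j, k) d)"
proof -
  let ?i = "translate \<tau>1 d i" and ?j = "translate \<tau>2 d j" and ?k = "translate \<tau>3 d k"
  let ?s = "L (i, j, k)"
  have range: "i \<in> {1..n}" "j \<in> {1..n}" "k \<in> {1..n}" "?i \<in> {1..n}" "?j \<in> {1..n}" "?k \<in> {1..n}"
    using assms translate_in_range[OF perms(1)] translate_in_range[OF perms(2)]
      translate_in_range[OF perms(3)]
    by (auto simp: cells_def)
  have neq: "i \<noteq> ?i" "j \<noteq> ?j" "k \<noteq> ?k"
    using translate_neq[OF perms(1) range(1) assms(2)] translate_neq[OF perms(2) range(2) assms(2)]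
      translate_neq[OF perms(3) range(3) assms(2)]
    by auto
  have "translate \<tau>4 d (translate \<tau>4 d ?s) = ?s"
    using L_in_range[OF assms(1)] by (rule translate_translate[OF perms(4)])
  then have vals: "L (?i, ?j, k) = ?s" "L (i, ?j, ?k) = ?s" "L (?i, j, ?k) = ?s"
    "L (i, ?j, k) = translate \<tau>4 d ?s" "L (?i, j, k) = translate \<tau>4 d ?s"
    "L (i, j, ?k) = translate \<tau>4 d ?s" "L (?i, ?j, ?k) = translate \<tau>4 d ?s"
    by (simp_all add: L_translate)
  show ?thesis
    unfolding is_3cube_def
    apply (rule bexI[of _ i], rule bexI[of _ ?i], rule bexI[of _ j], rule bexI[of _ ?j],
        rule bexI[of _ k], rule bexI[of _ ?k], rule exI[of _ ?s], rule exI[of _ "translate \<tau>4 d ?s"])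
    using range neq vals by simp_all
qed

lemma allowed_3cube_cube_at_iff:
  assumes "(i, j, k) \<in> cells n" "d \<in> {1..n} - {1}"
  shows "allowed_3cube n L A (cube_at \<sigma> (i, j, k) d)
    \<longleftrightarrow> (\<forall>y\<in>cube_at \<sigma> (i, j, k) d. translate \<tau>4 d (L y) \<notin> A y)"
  using assms is_3cube_cube_at swap3_cube_at by (simp add: allowed_3cube_def)

lemma inj_on_cube_at:
  assumes "(i, j, k) \<in> cells n"
  shows "inj_on (cube_at \<sigma> (i, j, k)) ({1..n} - {1})"
proof (rule inj_onI)
  fix d d' assume d: "d \<in> {1..n} - {1}" "d' \<in> {1..n} - {1}"
    and eq: "cube_at \<sigma> (i, j, k) d = cube_at \<sigma> (i, j, k) d'"
  have i: "i \<in> {1..n}"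
    using assms by (simp add: cells_def)
  have "fst ` cube_at \<sigma> (i, j, k) d = {i, translate \<tau>1 d i}" for d
    by auto
  then have "{i, translate \<tau>1 d i} = {i, translate \<tau>1 d' i}"
    using eq by metis
  moreover have "translate \<tau>1 d i \<noteq> i"
    using translate_neq[OF perms(1) i d(1)] .
  ultimately have "translate \<tau>1 d i = translate \<tau>1 d' i"
    by (metis doubleton_eq_iff)
  moreover have "d \<in> {1..n}" "d' \<in> {1..n}"
    using d by auto
  ultimately show "d = d'"
    using inj_onD[OF translate_inj_on_shifts[OF perms(1)]] by blast
qed

lemma L_two_translates:
  assumes "(i, j, k) \<in> cells n"
  shows "L (translate \<tau>1 d i, translate \<tau>2 d j, k) = L (i, j, k)"
    "L (i, translate \<tau>2 d j, translate \<tau>3 d k) = L (i, j, k)"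
    "L (translate \<tau>1 d i, j, translate \<tau>3 d k) = L (i, j, k)"
  using translate_translate[OF perms(4) L_in_range[OF assms]] by (simp_all add: L_translate)

lemma translates_of_L_eq:
  assumes range: "i1 \<in> {1..n}" "i2 \<in> {1..n}" "j1 \<in> {1..n}" "j2 \<in> {1..n}" "k1 \<in> {1..n}" "k2 \<in> {1..n}"
    and L: "L (i1, j1, k1) = L (i2, j2, k1)" "L (i1, j1, k1) = L (i1, j2, k2)"
    and d: "d = bxor (inv \<tau>1 i1) (inv \<tau>1 i2)"
  shows "i2 = translate \<tau>1 d i1" "j2 = translate \<tau>2 d j1" "k2 = translate \<tau>3 d k1"
proof -
  define a1 a2 b1 b2 e1 e2
    where "a1 = inv \<tau>1 i1" "a2 = inv \<tau>1 i2" "b1 = inv \<tau>2 j1" "b2 = inv \<tau>2 j2"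
      "e1 = inv \<tau>3 k1" "e2 = inv \<tau>3 k2"
  have pos: "0 < a1" "0 < a2" "0 < b1" "0 < b2" "0 < e1" "0 < e2"
    using inv_perm_in_range[OF perms(1) range(1)] inv_perm_in_range[OF perms(1) range(2)]
      inv_perm_in_range[OF perms(2) range(3)] inv_perm_in_range[OF perms(2) range(4)]
      inv_perm_in_range[OF perms(3) range(5)] inv_perm_in_range[OF perms(3) range(6)]
    unfolding a1_a2_b1_b2_e1_e2_def by auto
  have "bxor (bxor a1 b1) e1 = bxor (bxor a2 b2) e1" "bxor (bxor a1 b1) e1 = bxor (bxor a1 b2) e2"
    using L by (simp_all add: latin_apply a1_a2_b1_b2_e1_e2_def)
  then have "bxor a2 b2 = bxor a1 b1" "bxor (bxor a1 b2) e2 = bxor (bxor a1 b1) e1"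
    using pos by (simp_all add: bxor_right_inj)
  then have "b2 = bxor a2 (bxor a1 b1)" "e2 = bxor (bxor a1 b2) (bxor (bxor a1 b1) e1)"
    using pos by (metis bxor_cancel_left)+
  then have "bxor b1 d = b2" "bxor e1 d = e2"
    using pos by (simp_all add: d a1_a2_b1_b2_e1_e2_def[symmetric] bxor_ac)
  moreover have "bxor a1 d = a2"
    using pos by (simp add: d a1_a2_b1_b2_e1_e2_def[symmetric])
  ultimately show "i2 = translate \<tau>1 d i1" "j2 = translate \<tau>2 d j1" "k2 = translate \<tau>3 d k1"
    by (simp_all add: translate_def a1_a2_b1_b2_e1_e2_def)
qed

lemma cube_at_of_is_3cube:
  assumes "is_3cube n L C" "(i, j, k) \<in> C"
  shows "\<exists>d\<in>{1..n} - {1}. C = cube_at \<sigma> (i, j, k) d"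
proof -
  obtain i1 i2 j1 j2 k1 k2 x1 where
    range: "i1 \<in> {1..n}" "i2 \<in> {1..n}" "j1 \<in> {1..n}" "j2 \<in> {1..n}" "k1 \<in> {1..n}" "k2 \<in> {1..n}"
    and "i1 \<noteq> i2" and C: "C = {i1, i2} \<times> {j1, j2} \<times> {k1, k2}"
    and x1: "L (i1, j1, k1) = x1" "L (i2, j2, k1) = x1" "L (i1, j2, k2) = x1"
    using assms(1) unfolding is_3cube_def by (elim bexE exE conjE) (rule that; assumption)
  define d where "d = bxor (inv \<tau>1 i1) (inv \<tau>1 i2)"
  have "inv \<tau>1 i1 \<in> {1..n}" "inv \<tau>1 i2 \<in> {1..n}" "inv \<tau>1 i1 \<noteq> inv \<tau>1 i2"
    using range(1,2) \<open>i1 \<noteq> i2\<close> inv_perm_in_range[OF perms(1)] by auto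
  then have d: "d \<in> {1..n} - {1}"
    using bxor_closed bxor_eq_1_iff by (simp add: d_def)
  have "i2 = translate \<tau>1 d i1" "j2 = translate \<tau>2 d j1" "k2 = translate \<tau>3 d k1"
    using translates_of_L_eq[OF range _ _ d_def] x1 by simp_all
  moreover have "i \<in> {i1, i2}" "j \<in> {j1, j2}" "k \<in> {k1, k2}"
    using assms(2) C by auto
  ultimately have "{i1, i2} = {i, translate \<tau>1 d i}" "{j1, j2} = {j, translate \<tau>2 d j}"
    "{k1, k2} = {k, translate \<tau>3 d k}"
    using translate_pair_eq[OF perms(1) range(1)] translate_pair_eq[OF perms(2) range(3)]
      translate_pair_eq[OF perms(3) range(5)]
    by (metis, metis, metis)
  then show ?thesis
    using d C by auto
qed

lemma cube_at_opposite_corner: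
  assumes "(i, j, k) \<in> cells n" "(i', j', k') \<in> cube_at \<sigma> (i, j, k) d"
    and "\<not> (i' = i \<and> k' = k)" "\<not> (j' = j \<and> k' = k)" "\<not> (i' = i \<and> j' = j)"
    and "L (i', j', k') \<noteq> L (i, j, k)"
  shows "(i', j', k') = (translate \<tau>1 d i, translate \<tau>2 d j, translate \<tau>3 d k)"
  using assms L_two_translates[OF assms(1)] by auto

lemma translates_in_diagonal:
  assumes "(i, j, k) \<in> cells n" "d \<in> {1..n}"
  shows "(translate \<tau>1 d i, translate \<tau>2 d j, translate \<tau>3 d k)
    \<in> diagonal n \<sigma> (bxor (inv \<tau>1 i) (inv \<tau>3 k)) (bxor (inv \<tau>2 j) (inv \<tau>3 k))"
proof -
  have range: "inv \<tau>1 i \<in> {1..n}" "inv \<tau>2 j \<in> {1..n}" "inv \<tau>3 k \<in> {1..n}"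
    using assms(1) inv_perm_in_range perms by (auto simp: cells_def)
  have "translate \<tau>1 d i = \<tau>1 (bxor (bxor (inv \<tau>1 i) (inv \<tau>3 k)) (bxor (inv \<tau>3 k) d))"
    "translate \<tau>2 d j = \<tau>2 (bxor (bxor (inv \<tau>2 j) (inv \<tau>3 k)) (bxor (inv \<tau>3 k) d))"
    "translate \<tau>3 d k = \<tau>3 (bxor (inv \<tau>3 k) d)"
    using range by (simp_all add: translate_def bxor_ac)
  then show ?thesis
    unfolding diagonal.simps
    by (intro image_eqI[of _ _ "bxor (inv \<tau>3 k) d"] bxor_closed range(3) assms(2)) simp
qed

lemma transversal_set_opposite:
  assumes "transversal_set n L T" "(i0, j0, k0) \<in> T" "(i, j, k) \<in> T" "(i, j, k) \<noteq> (i0, j0, k0)"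
  shows "\<exists>d\<in>{1..n} - {1}. (i, j, k) = (translate \<tau>1 d i0, translate \<tau>2 d j0, translate \<tau>3 d k0)"
proof -
  have "\<forall>c\<in>T. \<forall>c'\<in>T. c \<noteq> c' \<longrightarrow>
      \<not> (fst c = fst c' \<and> snd (snd c) = snd (snd c')) \<and>
      \<not> (fst (snd c) = fst (snd c') \<and> snd (snd c) = snd (snd c')) \<and>
      \<not> (fst c = fst c' \<and> fst (snd c) = fst (snd c')) \<and>
      L c \<noteq> L c' \<and> (\<exists>!C. is_3cube n L C \<and> c \<in> C \<and> c' \<in> C)"
    using assms(1) unfolding transversal_set_def by (elim conjE)
  from this[rule_format, OF assms(3,2,4)]
  have lines: "\<not> (i = i0 \<and> k = k0)" "\<not> (j = j0 \<and> k = k0)" "\<not> (i = i0 \<and> j = j0)"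
    and symbols: "L (i, j, k) \<noteq> L (i0, j0, k0)"
    and "\<exists>!C. is_3cube n L C \<and> (i, j, k) \<in> C \<and> (i0, j0, k0) \<in> C"
    by simp_all
  then obtain C where C: "is_3cube n L C" "(i, j, k) \<in> C" "(i0, j0, k0) \<in> C"
    by blast
  obtain d where d: "d \<in> {1..n} - {1}" "C = cube_at \<sigma> (i0, j0, k0) d"
    using cube_at_of_is_3cube[OF C(1,3)] by blast
  have "(i0, j0, k0) \<in> cells n"
    using assms(1,2) by (auto simp: transversal_set_def)
  moreover have "(i, j, k) \<in> cube_at \<sigma> (i0, j0, k0) d"
    using C(2) d(2) by simp
  ultimately have "(i, j, k) = (translate \<tau>1 d i0, translate \<tau>2 d j0, translate \<tau>3 d k0)"
    using lines symbols by (rule cube_at_opposite_corner)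
  with d(1) show ?thesis
    by blast
qed

lemma transversal_subset_diagonal:
  assumes "transversal_set n L T"
  shows "\<exists>u\<in>{1..n}. \<exists>v\<in>{1..n}. T \<subseteq> diagonal n \<sigma> u v"
proof -
  have T: "T \<subseteq> cells n" "card T = n"
    using assms by (auto simp: transversal_set_def)
  then obtain i0 j0 k0 where c0: "(i0, j0, k0) \<in> T"
    using n_ge_1 by (metis card.empty ex_in_conv le_zero_eq not_one_le_zero prod_cases3)
  then have c0_cell: "(i0, j0, k0) \<in> cells n"
    using T by auto
  then have range: "inv \<tau>1 i0 \<in> {1..n}" "inv \<tau>2 j0 \<in> {1..n}" "inv \<tau>3 k0 \<in> {1..n}"
    using inv_perm_in_range perms by (auto simp: cells_def)
  have diag: "(i, j, k) \<in> diagonal n \<sigma> (bxor (inv \<tau>1 i0) (inv \<tau>3 k0)) (bxor (inv \<tau>2 j0) (inv \<tau>3 k0))"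
    if "(i, j, k) \<in> T" for i j k
  proof (cases "(i, j, k) = (i0, j0, k0)")
    case True
    then show ?thesis
      using translates_in_diagonal[OF c0_cell, of 1] n_ge_1 range by (simp add: translate_def)
  next
    case False
    then show ?thesis
      using transversal_set_opposite[OF assms c0 that] translates_in_diagonal[OF c0_cell] by auto
  qed
  have "T \<subseteq> diagonal n \<sigma> (bxor (inv \<tau>1 i0) (inv \<tau>3 k0)) (bxor (inv \<tau>2 j0) (inv \<tau>3 k0))"
    using diag by auto
  then show ?thesis
    using bxor_closed[OF range(1,3)] bxor_closed[OF range(2,3)] by blast
qed

lemma defects_UNIV:
  "defects n A \<sigma> c UNIV = {d\<in>{1..n} - {1}. \<exists>y\<in>cube_at \<sigma> c d. translate \<tau>4 d (L y) \<in> A y}"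
  by (auto simp: cube_at_eq_range_corner)

lemma card_allowed_3cubes_ge:
  assumes "(i, j, k) \<in> cells n"
  shows "n - 1 - card (defects n A \<sigma> (i, j, k) UNIV)
    \<le> card {C. allowed_3cube n L A C \<and> (i, j, k) \<in> C}"
proof -
  let ?G = "{1..n} - {1} - defects n A \<sigma> (i, j, k) UNIV"
  have "cube_at \<sigma> (i, j, k) ` ?G \<subseteq> {C. allowed_3cube n L A C \<and> (i, j, k) \<in> C}"
    using allowed_3cube_cube_at_iff[OF assms] by (auto simp: defects_UNIV simp del: defects.simps)
  moreover have "finite {C. allowed_3cube n L A C \<and> (i, j, k) \<in> C}"
  proof (rule finite_subset)
    show "{C. allowed_3cube n L A C \<and> (i, j, k) \<in> C} \<subseteq> Pow (cells n)"
      by (auto simp: allowed_3cube_def is_3cube_def cells_def)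
  qed (simp add: cells_def)
  ultimately have "card (cube_at \<sigma> (i, j, k) ` ?G) \<le> card {C. allowed_3cube n L A C \<and> (i, j, k) \<in> C}"
    by (rule card_mono[rotated])
  moreover have "card (cube_at \<sigma> (i, j, k) ` ?G) = card ?G"
    using inj_on_cube_at[OF assms] by (intro card_image) (auto intro: inj_on_subset)
  moreover have "n - 1 - card (defects n A \<sigma> (i, j, k) UNIV) \<le> card ?G"
    using diff_card_le_card_Diff[of "defects n A \<sigma> (i, j, k) UNIV" "{1..n} - {1}"] n_ge_1
    by (simp add: defects_UNIV del: defects.simps)
  ultimately show ?thesis
    by linarith
qed

lemma file_index_of_symbol:
  assumes "k \<in> {1..n}" "L (i, j, k) = s"
  shows "k = \<tau>3 (bxor (bxor (inv \<tau>1 i) (inv \<tau>2 j)) (inv \<tau>4 s))"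
proof -
  have "0 < inv \<tau>3 k"
    using inv_perm_in_range[OF perms(3) assms(1)] by simp
  moreover have eq: "bxor (bxor (inv \<tau>1 i) (inv \<tau>2 j)) (inv \<tau>3 k) = inv \<tau>4 s"
    using inv_L[of i j k] assms(2) by simp
  ultimately have "inv \<tau>3 k = bxor (bxor (inv \<tau>1 i) (inv \<tau>2 j)) (inv \<tau>4 s)"
    unfolding eq[symmetric] by simp
  then have "\<tau>3 (inv \<tau>3 k) = \<tau>3 (bxor (bxor (inv \<tau>1 i) (inv \<tau>2 j)) (inv \<tau>4 s))"
    by (rule arg_cong)
  then show ?thesis
    by simp
qed

lemma column_index_of_symbol:
  assumes "j \<in> {1..n}" "L (i, j, k) = s"
  shows "j = \<tau>2 (bxor (bxor (inv \<tau>1 i) (inv \<tau>3 k)) (inv \<tau>4 s))"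
proof -
  have "0 < inv \<tau>2 j"
    using inv_perm_in_range[OF perms(2) assms(1)] by simp
  moreover have eq: "bxor (inv \<tau>2 j) (bxor (inv \<tau>1 i) (inv \<tau>3 k)) = inv \<tau>4 s"
    using inv_L[of i j k] assms(2) by (simp add: bxor_ac)
  ultimately have "inv \<tau>2 j = bxor (bxor (inv \<tau>1 i) (inv \<tau>3 k)) (inv \<tau>4 s)"
    unfolding eq[symmetric] by (simp add: bxor_ac)
  then have "\<tau>2 (inv \<tau>2 j) = \<tau>2 (bxor (bxor (inv \<tau>1 i) (inv \<tau>3 k)) (inv \<tau>4 s))"
    by (rule arg_cong)
  then show ?thesis
    by simp
qed

lemma card_conflicts_row_layer_symbol_le:
  "card (conflicts n L A \<inter> {c\<in>cells n. fst c = i \<and> L c = s})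
    \<le> card {j\<in>{1..n}. \<tau>3 (bxor (bxor (inv \<tau>1 i) (inv \<tau>2 j)) (inv \<tau>4 s)) \<in> {z\<in>{1..n}. s \<in> A (i, j, z)}}"
proof -
  have "conflicts n L A \<inter> {c\<in>cells n. fst c = i \<and> L c = s}
    \<subseteq> (\<lambda>j. (i, j, \<tau>3 (bxor (bxor (inv \<tau>1 i) (inv \<tau>2 j)) (inv \<tau>4 s))))
      ` {j\<in>{1..n}. \<tau>3 (bxor (bxor (inv \<tau>1 i) (inv \<tau>2 j)) (inv \<tau>4 s)) \<in> {z\<in>{1..n}. s \<in> A (i, j, z)}}"
  proof
    fix c assume c: "c \<in> conflicts n L A \<inter> {c\<in>cells n. fst c = i \<and> L c = s}"
    then obtain j z where jz: "c = (i, j, z)" "j \<in> {1..n}" "z \<in> {1..n}" "L c = s" "s \<in> A c"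
      by (auto simp: conflicts_def cells_def)
    then have "z = \<tau>3 (bxor (bxor (inv \<tau>1 i) (inv \<tau>2 j)) (inv \<tau>4 s))"
      using file_index_of_symbol by simp
    with jz show "c \<in> (\<lambda>j. (i, j, \<tau>3 (bxor (bxor (inv \<tau>1 i) (inv \<tau>2 j)) (inv \<tau>4 s))))
      ` {j\<in>{1..n}. \<tau>3 (bxor (bxor (inv \<tau>1 i) (inv \<tau>2 j)) (inv \<tau>4 s)) \<in> {z\<in>{1..n}. s \<in> A (i, j, z)}}"
      by (intro image_eqI[of _ _ j]) auto
  qed
  then show ?thesis
    by (rule surj_card_le[rotated]) simp
qed

lemma card_conflicts_column_layer_symbol_le:
  "card (conflicts n L A \<inter> {c\<in>cells n. fst (snd c) = j \<and> L c = s})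
    \<le> card {i\<in>{1..n}. \<tau>3 (bxor (bxor (inv \<tau>1 i) (inv \<tau>2 j)) (inv \<tau>4 s)) \<in> {z\<in>{1..n}. s \<in> A (i, j, z)}}"
proof -
  have "conflicts n L A \<inter> {c\<in>cells n. fst (snd c) = j \<and> L c = s}
    \<subseteq> (\<lambda>i. (i, j, \<tau>3 (bxor (bxor (inv \<tau>1 i) (inv \<tau>2 j)) (inv \<tau>4 s))))
      ` {i\<in>{1..n}. \<tau>3 (bxor (bxor (inv \<tau>1 i) (inv \<tau>2 j)) (inv \<tau>4 s)) \<in> {z\<in>{1..n}. s \<in> A (i, j, z)}}"
  proof
    fix c assume "c \<in> conflicts n L A \<inter> {c\<in>cells n. fst (snd c) = j \<and> L c = s}"
    then obtain i z where iz: "c = (i, j, z)" "i \<in> {1..n}" "z \<in> {1..n}" "L c = s" "s \<in> A c"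
      by (auto simp: conflicts_def cells_def)
    then have "z = \<tau>3 (bxor (bxor (inv \<tau>1 i) (inv \<tau>2 j)) (inv \<tau>4 s))"
      using file_index_of_symbol by simp
    with iz show "c \<in> (\<lambda>i. (i, j, \<tau>3 (bxor (bxor (inv \<tau>1 i) (inv \<tau>2 j)) (inv \<tau>4 s))))
      ` {i\<in>{1..n}. \<tau>3 (bxor (bxor (inv \<tau>1 i) (inv \<tau>2 j)) (inv \<tau>4 s)) \<in> {z\<in>{1..n}. s \<in> A (i, j, z)}}"
      by (intro image_eqI[of _ _ i]) auto
  qed
  then show ?thesis
    by (rule surj_card_le[rotated]) simp
qed

lemma card_conflicts_file_layer_symbol_le:
  "card (conflicts n L A \<inter> {c\<in>cells n. snd (snd c) = k \<and> L c = s})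
    \<le> card {i\<in>{1..n}. \<tau>2 (bxor (bxor (inv \<tau>1 i) (inv \<tau>3 k)) (inv \<tau>4 s)) \<in> {y\<in>{1..n}. s \<in> A (i, y, k)}}"
proof -
  have "conflicts n L A \<inter> {c\<in>cells n. snd (snd c) = k \<and> L c = s}
    \<subseteq> (\<lambda>i. (i, \<tau>2 (bxor (bxor (inv \<tau>1 i) (inv \<tau>3 k)) (inv \<tau>4 s)), k))
      ` {i\<in>{1..n}. \<tau>2 (bxor (bxor (inv \<tau>1 i) (inv \<tau>3 k)) (inv \<tau>4 s)) \<in> {y\<in>{1..n}. s \<in> A (i, y, k)}}"
  proof
    fix c assume "c \<in> conflicts n L A \<inter> {c\<in>cells n. snd (snd c) = k \<and> L c = s}"
    then obtain i y where iy: "c = (i, y, k)" "i \<in> {1..n}" "y \<in> {1..n}" "L c = s" "s \<in> A c"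
      by (auto simp: conflicts_def cells_def)
    then have "y = \<tau>2 (bxor (bxor (inv \<tau>1 i) (inv \<tau>3 k)) (inv \<tau>4 s))"
      using column_index_of_symbol by simp
    with iy show "c \<in> (\<lambda>i. (i, \<tau>2 (bxor (bxor (inv \<tau>1 i) (inv \<tau>3 k)) (inv \<tau>4 s)), k))
      ` {i\<in>{1..n}. \<tau>2 (bxor (bxor (inv \<tau>1 i) (inv \<tau>3 k)) (inv \<tau>4 s)) \<in> {y\<in>{1..n}. s \<in> A (i, y, k)}}"
      by (intro image_eqI[of _ _ i]) auto
  qed
  then show ?thesis
    by (rule surj_card_le[rotated]) simp
qed

lemma card_conflicts_diagonal_le:
  assumes "u \<in> {1..n}" "v \<in> {1..n}"
  shows "card (conflicts n L A \<inter> diagonal n \<sigma> u v)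
    \<le> card {e\<in>{1..n}. \<tau>4 (bxor (bxor u v) e) \<in> A (\<tau>1 (bxor u e), \<tau>2 (bxor v e), \<tau>3 e)}"
proof -
  have "L (\<tau>1 (bxor u e), \<tau>2 (bxor v e), \<tau>3 e) = \<tau>4 (bxor (bxor u v) e)" if "e \<in> {1..n}" for e
    using assms that by (simp add: latin_apply bxor_ac)
  then have "conflicts n L A \<inter> diagonal n \<sigma> u v
    \<subseteq> (\<lambda>e. (\<tau>1 (bxor u e), \<tau>2 (bxor v e), \<tau>3 e))
      ` {e\<in>{1..n}. \<tau>4 (bxor (bxor u v) e) \<in> A (\<tau>1 (bxor u e), \<tau>2 (bxor v e), \<tau>3 e)}"
    by (auto simp: conflicts_def)
  then show ?thesis
    by (rule surj_card_le[rotated]) simp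
qed

context
  fixes i j k :: nat
  assumes cell: "(i, j, k) \<in> cells n"
begin

lemma cell_range: "i \<in> {1..n}" "j \<in> {1..n}" "k \<in> {1..n}"
  using cell by (auto simp: cells_def)

lemma translate_L_cell: "translate \<tau>4 d (L (i, j, k)) = \<tau>4 (bxor (bxor (bxor (inv \<tau>1 i) (inv \<tau>2 j)) (inv \<tau>3 k)) d)"
  by (simp add: translate_def inv_L)

lemma translate_twice_L_cell [simp]: "translate \<tau>4 d (translate \<tau>4 d (L (i, j, k))) = L (i, j, k)"
  using translate_translate[OF perms(4) L_in_range[OF cell]] .

lemma card_defects_origin_le:
  assumes "mcube n g A"
  shows "card (defects n A \<sigma> (i, j, k) {(False, False, False)}) \<le> g"
proof -
  have "card (defects n A \<sigma> (i, j, k) {(False, False, False)}) \<le> card (A (i, j, k))"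
  proof (rule card_inj_on_le)
    show "inj_on (\<lambda>d. translate \<tau>4 d (L (i, j, k))) (defects n A \<sigma> (i, j, k) {(False, False, False)})"
      using translate_inj_on_shifts[OF perms(4)] by (rule inj_on_subset) auto
  qed (use mcube_cell[OF assms cell] in auto)
  then show ?thesis
    using mcube_cell[OF assms cell] by linarith
qed

lemma card_defects_edges_le:
  assumes "mcube n g A"
  shows "card (defects n A \<sigma> (i, j, k) {(True, False, False)}) \<le> g"
    "card (defects n A \<sigma> (i, j, k) {(False, True, False)}) \<le> g"
    "card (defects n A \<sigma> (i, j, k) {(False, False, True)}) \<le> g"
proof -
  have "card (defects n A \<sigma> (i, j, k) {(True, False, False)}) \<le> card {x\<in>{1..n}. L (i, j, k) \<in> A (x, j, k)}"
  proof (rule card_inj_on_le)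
    show "inj_on (\<lambda>d. translate \<tau>1 d i) (defects n A \<sigma> (i, j, k) {(True, False, False)})"
      using translate_inj_on_shifts[OF perms(1)] by (rule inj_on_subset) auto
    show "(\<lambda>d. translate \<tau>1 d i) ` defects n A \<sigma> (i, j, k) {(True, False, False)}
      \<subseteq> {x\<in>{1..n}. L (i, j, k) \<in> A (x, j, k)}"
      using translate_in_range[OF perms(1) cell_range(1)] by (auto simp: L_translate)
  qed simp
  then show "card (defects n A \<sigma> (i, j, k) {(True, False, False)}) \<le> g"
    using mcube_column[OF assms cell_range(2,3)] by (rule order_trans)
  have "card (defects n A \<sigma> (i, j, k) {(False, True, False)}) \<le> card {y\<in>{1..n}. L (i, j, k) \<in> A (i, y, k)}"
  proof (rule card_inj_on_le)
    show "inj_on (\<lambda>d. translate \<tau>2 d j) (defects n A \<sigma> (i, j, k) {(False, True, False)})"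
      using translate_inj_on_shifts[OF perms(2)] by (rule inj_on_subset) auto
    show "(\<lambda>d. translate \<tau>2 d j) ` defects n A \<sigma> (i, j, k) {(False, True, False)}
      \<subseteq> {y\<in>{1..n}. L (i, j, k) \<in> A (i, y, k)}"
      using translate_in_range[OF perms(2) cell_range(2)] by (auto simp: L_translate)
  qed simp
  then show "card (defects n A \<sigma> (i, j, k) {(False, True, False)}) \<le> g"
    using mcube_row[OF assms cell_range(1,3)] by (rule order_trans)
  have "card (defects n A \<sigma> (i, j, k) {(False, False, True)}) \<le> card {z\<in>{1..n}. L (i, j, k) \<in> A (i, j, z)}"
  proof (rule card_inj_on_le)
    show "inj_on (\<lambda>d. translate \<tau>3 d k) (defects n A \<sigma> (i, j, k) {(False, False, True)})"
      using translate_inj_on_shifts[OF perms(3)] by (rule inj_on_subset) auto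
    show "(\<lambda>d. translate \<tau>3 d k) ` defects n A \<sigma> (i, j, k) {(False, False, True)}
      \<subseteq> {z\<in>{1..n}. L (i, j, k) \<in> A (i, j, z)}"
      using translate_in_range[OF perms(3) cell_range(3)] by (auto simp: L_translate)
  qed simp
  then show "card (defects n A \<sigma> (i, j, k) {(False, False, True)}) \<le> g"
    using mcube_file[OF assms cell_range(1,2)] by (rule order_trans)
qed

lemma defects_two_edges_subset:
  "defects n A \<sigma> (i, j, k) {(True, True, False), (True, False, True)}
    \<subseteq> {d\<in>{1..n} - {1}. \<tau>4 (bxor (bxor (bxor (inv \<tau>1 i) (inv \<tau>2 j)) (inv \<tau>3 k)) d)
        \<in> A (translate \<tau>1 d i, translate \<tau>2 d j, k) \<union> A (translate \<tau>1 d i, j, translate \<tau>3 d k)}"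
  using L_two_translates[OF cell] translate_L_cell by auto

lemma defects_face_subset:
  "defects n A \<sigma> (i, j, k) {(False, True, True)}
    \<subseteq> {d\<in>{1..n} - {1}. \<tau>4 (bxor (bxor (bxor (inv \<tau>1 i) (inv \<tau>2 j)) (inv \<tau>3 k)) d)
        \<in> A (i, translate \<tau>2 d j, translate \<tau>3 d k)}"
  using L_two_translates[OF cell] translate_L_cell by auto

lemma defects_opposite_subset:
  "defects n A \<sigma> (i, j, k) {(True, True, True)}
    \<subseteq> {d\<in>{1..n} - {1}. \<tau>3 (bxor (inv \<tau>3 k) d)
        \<in> {z\<in>{1..n}. L (i, j, k) \<in> A (translate \<tau>1 d i, translate \<tau>2 d j, z)}}"
proof
  fix d assume d: "d \<in> defects n A \<sigma> (i, j, k) {(True, True, True)}"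
  have "translate \<tau>3 d k \<in> {1..n}"
    using d translate_in_range[OF perms(3) cell_range(3)] by auto
  moreover have "translate \<tau>4 d (L (translate \<tau>1 d i, translate \<tau>2 d j, translate \<tau>3 d k)) = L (i, j, k)"
    using translate_twice_L_cell by (simp add: L_translate)
  ultimately show "d \<in> {d\<in>{1..n} - {1}. \<tau>3 (bxor (inv \<tau>3 k) d)
        \<in> {z\<in>{1..n}. L (i, j, k) \<in> A (translate \<tau>1 d i, translate \<tau>2 d j, z)}}"
    using d by (simp add: translate_def[of \<tau>3])
qed

lemma card_defects_le:
  assumes "mcube n g A"
  shows "card (defects n A \<sigma> (i, j, k) UNIV) \<le> 4 * g
    + card (defects n A \<sigma> (i, j, k) {(True, True, False), (True, False, True)})
    + card (defects n A \<sigma> (i, j, k) {(False, True, True)})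
    + card (defects n A \<sigma> (i, j, k) {(True, True, True)})"
proof -
  let ?D = "defects n A \<sigma> (i, j, k)"
  have labels: "UNIV = {(False, False, False)} \<union> {(True, False, False)} \<union> {(False, True, False)}
      \<union> {(False, False, True)} \<union> {(True, True, False), (True, False, True)} \<union> {(False, True, True)}
      \<union> {(True, True, True)}"
    by auto
  have "?D UNIV = ?D {(False, False, False)} \<union> ?D {(True, False, False)} \<union> ?D {(False, True, False)}
      \<union> ?D {(False, False, True)} \<union> ?D {(True, True, False), (True, False, True)} \<union> ?D {(False, True, True)}
      \<union> ?D {(True, True, True)}"
    by (subst labels) (simp only: defects_Un)
  then have "card (?D UNIV) \<le> card (?D {(False, False, False)}) + card (?D {(True, False, False)})
      + card (?D {(False, True, False)}) + card (?D {(False, False, True)})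
      + card (?D {(True, True, False), (True, False, True)}) + card (?D {(False, True, True)})
      + card (?D {(True, True, True)})"
    by (simp only:) (intro card_Un_le_add order_refl)
  then show ?thesis
    using card_defects_origin_le[OF assms] card_defects_edges_le[OF assms] by linarith
qed

end

end

section \<open>A relabelling avoiding all bad events\<close>

definition many_conflicts :: "nat \<Rightarrow> (cell \<Rightarrow> nat set) \<Rightarrow> nat \<Rightarrow> (quad \<Rightarrow> cell set) \<Rightarrow> quad set" where
  "many_conflicts n A k X = {\<sigma>\<in>quads n. k \<le> card (conflicts n (latin \<sigma>) A \<inter> X \<sigma>)}"

definition defect_events :: "nat \<Rightarrow> (cell \<Rightarrow> nat set) \<Rightarrow> nat \<Rightarrow> nat \<Rightarrow> cell \<Rightarrow> quad set" where
  "defect_events n A r m c = {\<sigma>\<in>quads n.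
     r \<le> card (defects n A \<sigma> c {(True, True, False), (True, False, True)}) \<or>
     m \<le> card (defects n A \<sigma> c {(False, True, True)}) \<or>
     r \<le> card (defects n A \<sigma> c {(True, True, True)})}"

lemma many_conflicts_subset:
  assumes "\<And>\<tau>1 \<tau>2 \<tau>3 \<tau>4. (\<tau>1, \<tau>2, \<tau>3, \<tau>4) \<in> quads n \<Longrightarrow>
    card (conflicts n (latin (\<tau>1, \<tau>2, \<tau>3, \<tau>4)) A \<inter> X (\<tau>1, \<tau>2, \<tau>3, \<tau>4)) \<le> N \<tau>1 \<tau>2 \<tau>3 \<tau>4"
  shows "many_conflicts n A k X \<subseteq> {\<sigma>\<in>quads n. case \<sigma> of (\<tau>1, \<tau>2, \<tau>3, \<tau>4) \<Rightarrow> k \<le> N \<tau>1 \<tau>2 \<tau>3 \<tau>4}"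
  using assms by (force simp: many_conflicts_def intro: le_trans)

(* Diagonals stand in for transversal-sets, see transversal_subset_diagonal. *)
definition watched_sets :: "nat \<Rightarrow> (quad \<Rightarrow> cell set) set" where
  "watched_sets n =
     (\<lambda>R _. R) ` (rows n \<union> columns n \<union> files n)
     \<union> (\<lambda>(i, s) \<sigma>. {c\<in>cells n. fst c = i \<and> latin \<sigma> c = s}) ` ({1..n} \<times> {1..n})
     \<union> (\<lambda>(j, s) \<sigma>. {c\<in>cells n. fst (snd c) = j \<and> latin \<sigma> c = s}) ` ({1..n} \<times> {1..n})
     \<union> (\<lambda>(k, s) \<sigma>. {c\<in>cells n. snd (snd c) = k \<and> latin \<sigma> c = s}) ` ({1..n} \<times> {1..n})
     \<union> (\<lambda>(u, v) \<sigma>. diagonal n \<sigma> u v) ` ({1..n} \<times> {1..n})"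

lemma card_image_square_le: "card (f ` ({1..n} \<times> {1..n})) \<le> n ^ 2"
  using card_image_le[of "{1..n} \<times> {1..n}" f] by (simp add: card_cartesian_product power2_eq_square)

lemma lines_eq_image:
  "rows n = (\<lambda>(i, k). {(i, j', k) | j'. j' \<in> {1..n}}) ` ({1..n} \<times> {1..n})"
  "columns n = (\<lambda>(j, k). {(i', j, k) | i'. i' \<in> {1..n}}) ` ({1..n} \<times> {1..n})"
  "files n = (\<lambda>(i, j). {(i, j, k') | k'. k' \<in> {1..n}}) ` ({1..n} \<times> {1..n})"
  unfolding rows_def columns_def files_def by force+

lemma card_lines_le: "card (rows n) \<le> n ^ 2" "card (columns n) \<le> n ^ 2" "card (files n) \<le> n ^ 2"
  unfolding lines_eq_image by (rule card_image_square_le)+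

lemma finite_watched_sets: "finite (watched_sets n)"
  by (simp add: watched_sets_def lines_eq_image)

lemma card_watched_sets_le: "card (watched_sets n) \<le> 7 * n ^ 2"
proof -
  have "card ((\<lambda>R _. R) ` (rows n \<union> columns n \<union> files n)) \<le> n ^ 2 + n ^ 2 + n ^ 2"
    using card_lines_le[of n] by (intro order_trans[OF card_image_le] card_Un_le_add) (auto simp: lines_eq_image)
  then have "card (watched_sets n) \<le> (n ^ 2 + n ^ 2 + n ^ 2) + n ^ 2 + n ^ 2 + n ^ 2 + n ^ 2"
    unfolding watched_sets_def by (intro card_Un_le_add card_image_square_le)
  then show ?thesis
    by simp
qed

lemma watched_sets_memI:
  "R \<in> rows n \<union> columns n \<union> files n \<Longrightarrow> (\<lambda>_. R) \<in> watched_sets n"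
  "i \<in> {1..n} \<Longrightarrow> s \<in> {1..n} \<Longrightarrow> (\<lambda>\<sigma>. {c\<in>cells n. fst c = i \<and> latin \<sigma> c = s}) \<in> watched_sets n"
  "j \<in> {1..n} \<Longrightarrow> s \<in> {1..n} \<Longrightarrow> (\<lambda>\<sigma>. {c\<in>cells n. fst (snd c) = j \<and> latin \<sigma> c = s}) \<in> watched_sets n"
  "k \<in> {1..n} \<Longrightarrow> s \<in> {1..n} \<Longrightarrow> (\<lambda>\<sigma>. {c\<in>cells n. snd (snd c) = k \<and> latin \<sigma> c = s}) \<in> watched_sets n"
  "u \<in> {1..n} \<Longrightarrow> v \<in> {1..n} \<Longrightarrow> (\<lambda>\<sigma>. diagonal n \<sigma> u v) \<in> watched_sets n"
  unfolding watched_sets_def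
    apply (rule UnI1, rule UnI1, rule UnI1, rule UnI1, rule imageI, assumption)
   apply (rule UnI1, rule UnI1, rule UnI1, rule UnI2, rule image_eqI[where x = "(i, s)"]; simp)
  apply (rule UnI1, rule UnI1, rule UnI2, rule image_eqI[where x = "(j, s)"]; simp)
  apply (rule UnI1, rule UnI2, rule image_eqI[where x = "(k, s)"]; simp)
  apply (rule UnI2, rule image_eqI[where x = "(u, v)"]; simp)
  done

context boolean_order
begin

lemma relabelling_quad: "(\<tau>1, \<tau>2, \<tau>3, \<tau>4) \<in> quads n \<Longrightarrow> relabelling t n \<tau>1 \<tau>2 \<tau>3 \<tau>4"
  by unfold_locales (auto simp: quads_def n_eq)

context
  fixes g :: nat and A :: "cell \<Rightarrow> nat set"
  assumes A: "mcube n g A"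
begin

lemma card_many_conflicts_row_le:
  assumes "R \<in> rows n"
  shows "real (card (many_conflicts n A k (\<lambda>_. R))) \<le> fact n ^ 4 * real g ^ k / fact k"
proof -
  obtain i kk where ik: "i \<in> {1..n}" "kk \<in> {1..n}" "R = {(i, j', kk) | j'. j' \<in> {1..n}}"
    using assms by (auto simp: rows_def)
  show ?thesis
  proof (rule card_le_real_bound[OF many_conflicts_subset])
    show "card (conflicts n (latin (\<tau>1, \<tau>2, \<tau>3, \<tau>4)) A \<inter> R)
      \<le> card {j\<in>{1..n}. \<tau>4 (bxor (bxor (inv \<tau>1 i) (inv \<tau>2 j)) (inv \<tau>3 kk)) \<in> A (i, j, kk)}"
      for \<tau>1 \<tau>2 \<tau>3 \<tau>4
      using card_conflicts_row_le[of n "latin (\<tau>1, \<tau>2, \<tau>3, \<tau>4)" A i kk] ik(3) by (simp add: latin_apply)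
    show "real (card {\<sigma>\<in>quads n. case \<sigma> of (\<tau>1, \<tau>2, \<tau>3, \<tau>4) \<Rightarrow>
        k \<le> card {j\<in>{1..n}. \<tau>4 (bxor (bxor (inv \<tau>1 i) (inv \<tau>2 j)) (inv \<tau>3 kk)) \<in> A (i, j, kk)}})
      \<le> fact n ^ 4 * real g ^ k / fact k"
    proof (rule card_quads_hits4_le, intro conjI ballI)
      fix \<tau>1 \<tau>2 \<tau>3 assume \<tau>: "\<tau>1 \<in> perms n" "\<tau>2 \<in> perms n" "\<tau>3 \<in> perms n"
      show "inj_on (\<lambda>j. bxor (bxor (inv \<tau>1 i) (inv \<tau>2 j)) (inv \<tau>3 kk)) {1..n}"
        using inj_on_bxor_inv_perm[OF \<tau>(2), of "bxor (inv \<tau>1 i) (inv \<tau>3 kk)"] by (simp add: bxor_ac)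
      show "(\<lambda>j. bxor (bxor (inv \<tau>1 i) (inv \<tau>2 j)) (inv \<tau>3 kk)) ` {1..n} \<subseteq> {1..n}"
        using ik \<tau> by (blast intro: bxor_closed inv_perm_in_range)
      fix j assume "j \<in> {1..n}"
      then show "finite (A (i, j, kk))" "card (A (i, j, kk)) \<le> g"
        using mcube_cell[OF A] ik by (auto simp: cells_def)
    qed
  qed simp
qed

lemma card_many_conflicts_column_le:
  assumes "R \<in> columns n"
  shows "real (card (many_conflicts n A k (\<lambda>_. R))) \<le> fact n ^ 4 * real g ^ k / fact k"
proof -
  obtain j kk where jk: "j \<in> {1..n}" "kk \<in> {1..n}" "R = {(i', j, kk) | i'. i' \<in> {1..n}}"
    using assms by (auto simp: columns_def)
  show ?thesis
  proof (rule card_le_real_bound[OF many_conflicts_subset])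
    show "card (conflicts n (latin (\<tau>1, \<tau>2, \<tau>3, \<tau>4)) A \<inter> R)
      \<le> card {i\<in>{1..n}. \<tau>4 (bxor (bxor (inv \<tau>1 i) (inv \<tau>2 j)) (inv \<tau>3 kk)) \<in> A (i, j, kk)}"
      for \<tau>1 \<tau>2 \<tau>3 \<tau>4
      using card_conflicts_column_le[of n "latin (\<tau>1, \<tau>2, \<tau>3, \<tau>4)" A j kk] jk(3) by (simp add: latin_apply)
    show "real (card {\<sigma>\<in>quads n. case \<sigma> of (\<tau>1, \<tau>2, \<tau>3, \<tau>4) \<Rightarrow>
        k \<le> card {i\<in>{1..n}. \<tau>4 (bxor (bxor (inv \<tau>1 i) (inv \<tau>2 j)) (inv \<tau>3 kk)) \<in> A (i, j, kk)}})
      \<le> fact n ^ 4 * real g ^ k / fact k"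
    proof (rule card_quads_hits4_le, intro conjI ballI)
      fix \<tau>1 \<tau>2 \<tau>3 assume \<tau>: "\<tau>1 \<in> perms n" "\<tau>2 \<in> perms n" "\<tau>3 \<in> perms n"
      show "inj_on (\<lambda>i. bxor (bxor (inv \<tau>1 i) (inv \<tau>2 j)) (inv \<tau>3 kk)) {1..n}"
        using inj_on_bxor_inv_perm[OF \<tau>(1), of "bxor (inv \<tau>2 j) (inv \<tau>3 kk)"] by (simp add: bxor_ac)
      show "(\<lambda>i. bxor (bxor (inv \<tau>1 i) (inv \<tau>2 j)) (inv \<tau>3 kk)) ` {1..n} \<subseteq> {1..n}"
        using jk \<tau> by (blast intro: bxor_closed inv_perm_in_range)
      fix i assume "i \<in> {1..n}"
      then show "finite (A (i, j, kk))" "card (A (i, j, kk)) \<le> g"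
        using mcube_cell[OF A] jk by (auto simp: cells_def)
    qed
  qed simp
qed

lemma card_many_conflicts_file_le:
  assumes "R \<in> files n"
  shows "real (card (many_conflicts n A k (\<lambda>_. R))) \<le> fact n ^ 4 * real g ^ k / fact k"
proof -
  obtain i j where ij: "i \<in> {1..n}" "j \<in> {1..n}" "R = {(i, j, k') | k'. k' \<in> {1..n}}"
    using assms by (auto simp: files_def)
  show ?thesis
  proof (rule card_le_real_bound[OF many_conflicts_subset])
    show "card (conflicts n (latin (\<tau>1, \<tau>2, \<tau>3, \<tau>4)) A \<inter> R)
      \<le> card {kk\<in>{1..n}. \<tau>4 (bxor (bxor (inv \<tau>1 i) (inv \<tau>2 j)) (inv \<tau>3 kk)) \<in> A (i, j, kk)}"
      for \<tau>1 \<tau>2 \<tau>3 \<tau>4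
      using card_conflicts_file_le[of n "latin (\<tau>1, \<tau>2, \<tau>3, \<tau>4)" A i j] ij(3) by (simp add: latin_apply)
    show "real (card {\<sigma>\<in>quads n. case \<sigma> of (\<tau>1, \<tau>2, \<tau>3, \<tau>4) \<Rightarrow>
        k \<le> card {kk\<in>{1..n}. \<tau>4 (bxor (bxor (inv \<tau>1 i) (inv \<tau>2 j)) (inv \<tau>3 kk)) \<in> A (i, j, kk)}})
      \<le> fact n ^ 4 * real g ^ k / fact k"
    proof (rule card_quads_hits4_le, intro conjI ballI)
      fix \<tau>1 \<tau>2 \<tau>3 assume \<tau>: "\<tau>1 \<in> perms n" "\<tau>2 \<in> perms n" "\<tau>3 \<in> perms n"
      show "inj_on (\<lambda>kk. bxor (bxor (inv \<tau>1 i) (inv \<tau>2 j)) (inv \<tau>3 kk)) {1..n}"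
        using inj_on_bxor_inv_perm[OF \<tau>(3), of "bxor (inv \<tau>1 i) (inv \<tau>2 j)"] by (simp add: bxor_ac)
      show "(\<lambda>kk. bxor (bxor (inv \<tau>1 i) (inv \<tau>2 j)) (inv \<tau>3 kk)) ` {1..n} \<subseteq> {1..n}"
        using ij \<tau> by (blast intro: bxor_closed inv_perm_in_range)
      fix kk assume "kk \<in> {1..n}"
      then show "finite (A (i, j, kk))" "card (A (i, j, kk)) \<le> g"
        using mcube_cell[OF A] ij by (auto simp: cells_def)
    qed
  qed simp
qed

lemma card_many_conflicts_row_layer_le:
  assumes "i \<in> {1..n}" "s \<in> {1..n}"
  shows "real (card (many_conflicts n A k (\<lambda>\<sigma>. {c\<in>cells n. fst c = i \<and> latin \<sigma> c = s})))
    \<le> fact n ^ 4 * real g ^ k / fact k"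
proof (rule card_le_real_bound[OF many_conflicts_subset])
  show "card (conflicts n (latin (\<tau>1, \<tau>2, \<tau>3, \<tau>4)) A \<inter> {c\<in>cells n. fst c = i \<and> latin (\<tau>1, \<tau>2, \<tau>3, \<tau>4) c = s})
    \<le> card {j\<in>{1..n}. \<tau>3 (bxor (bxor (inv \<tau>1 i) (inv \<tau>2 j)) (inv \<tau>4 s)) \<in> {z\<in>{1..n}. s \<in> A (i, j, z)}}"
    if "(\<tau>1, \<tau>2, \<tau>3, \<tau>4) \<in> quads n" for \<tau>1 \<tau>2 \<tau>3 \<tau>4
    using relabelling.card_conflicts_row_layer_symbol_le[OF relabelling_quad[OF that]] .
  show "real (card {\<sigma>\<in>quads n. case \<sigma> of (\<tau>1, \<tau>2, \<tau>3, \<tau>4) \<Rightarrow>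
      k \<le> card {j\<in>{1..n}. \<tau>3 (bxor (bxor (inv \<tau>1 i) (inv \<tau>2 j)) (inv \<tau>4 s)) \<in> {z\<in>{1..n}. s \<in> A (i, j, z)}}})
    \<le> fact n ^ 4 * real g ^ k / fact k"
  proof (rule card_quads_hits3_le, intro conjI ballI)
    fix \<tau>1 \<tau>2 \<tau>4 assume \<tau>: "\<tau>1 \<in> perms n" "\<tau>2 \<in> perms n" "\<tau>4 \<in> perms n"
    show "inj_on (\<lambda>j. bxor (bxor (inv \<tau>1 i) (inv \<tau>2 j)) (inv \<tau>4 s)) {1..n}"
      using inj_on_bxor_inv_perm[OF \<tau>(2), of "bxor (inv \<tau>1 i) (inv \<tau>4 s)"] by (simp add: bxor_ac)
    show "(\<lambda>j. bxor (bxor (inv \<tau>1 i) (inv \<tau>2 j)) (inv \<tau>4 s)) ` {1..n} \<subseteq> {1..n}"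
      using assms \<tau> by (blast intro: bxor_closed inv_perm_in_range)
    fix j assume "j \<in> {1..n}"
    then show "finite {z\<in>{1..n}. s \<in> A (i, j, z)}" "card {z\<in>{1..n}. s \<in> A (i, j, z)} \<le> g"
      using mcube_file[OF A assms(1)] by auto
  qed
qed simp

lemma card_many_conflicts_column_layer_le:
  assumes "j \<in> {1..n}" "s \<in> {1..n}"
  shows "real (card (many_conflicts n A k (\<lambda>\<sigma>. {c\<in>cells n. fst (snd c) = j \<and> latin \<sigma> c = s})))
    \<le> fact n ^ 4 * real g ^ k / fact k"
proof (rule card_le_real_bound[OF many_conflicts_subset])
  show "card (conflicts n (latin (\<tau>1, \<tau>2, \<tau>3, \<tau>4)) A \<inter> {c\<in>cells n. fst (snd c) = j \<and> latin (\<tau>1, \<tau>2, \<tau>3, \<tau>4) c = s})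
    \<le> card {i\<in>{1..n}. \<tau>3 (bxor (bxor (inv \<tau>1 i) (inv \<tau>2 j)) (inv \<tau>4 s)) \<in> {z\<in>{1..n}. s \<in> A (i, j, z)}}"
    if "(\<tau>1, \<tau>2, \<tau>3, \<tau>4) \<in> quads n" for \<tau>1 \<tau>2 \<tau>3 \<tau>4
    using relabelling.card_conflicts_column_layer_symbol_le[OF relabelling_quad[OF that]] .
  show "real (card {\<sigma>\<in>quads n. case \<sigma> of (\<tau>1, \<tau>2, \<tau>3, \<tau>4) \<Rightarrow>
      k \<le> card {i\<in>{1..n}. \<tau>3 (bxor (bxor (inv \<tau>1 i) (inv \<tau>2 j)) (inv \<tau>4 s)) \<in> {z\<in>{1..n}. s \<in> A (i, j, z)}}})
    \<le> fact n ^ 4 * real g ^ k / fact k"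
  proof (rule card_quads_hits3_le, intro conjI ballI)
    fix \<tau>1 \<tau>2 \<tau>4 assume \<tau>: "\<tau>1 \<in> perms n" "\<tau>2 \<in> perms n" "\<tau>4 \<in> perms n"
    show "inj_on (\<lambda>i. bxor (bxor (inv \<tau>1 i) (inv \<tau>2 j)) (inv \<tau>4 s)) {1..n}"
      using inj_on_bxor_inv_perm[OF \<tau>(1), of "bxor (inv \<tau>2 j) (inv \<tau>4 s)"] by (simp add: bxor_ac)
    show "(\<lambda>i. bxor (bxor (inv \<tau>1 i) (inv \<tau>2 j)) (inv \<tau>4 s)) ` {1..n} \<subseteq> {1..n}"
      using assms \<tau> by (blast intro: bxor_closed inv_perm_in_range)
    fix i assume "i \<in> {1..n}"
    then show "finite {z\<in>{1..n}. s \<in> A (i, j, z)}" "card {z\<in>{1..n}. s \<in> A (i, j, z)} \<le> g"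
      using mcube_file[OF A _ assms(1)] by auto
  qed
qed simp

lemma card_many_conflicts_file_layer_le:
  assumes "kk \<in> {1..n}" "s \<in> {1..n}"
  shows "real (card (many_conflicts n A k (\<lambda>\<sigma>. {c\<in>cells n. snd (snd c) = kk \<and> latin \<sigma> c = s})))
    \<le> fact n ^ 4 * real g ^ k / fact k"
proof (rule card_le_real_bound[OF many_conflicts_subset])
  show "card (conflicts n (latin (\<tau>1, \<tau>2, \<tau>3, \<tau>4)) A \<inter> {c\<in>cells n. snd (snd c) = kk \<and> latin (\<tau>1, \<tau>2, \<tau>3, \<tau>4) c = s})
    \<le> card {i\<in>{1..n}. \<tau>2 (bxor (bxor (inv \<tau>1 i) (inv \<tau>3 kk)) (inv \<tau>4 s)) \<in> {y\<in>{1..n}. s \<in> A (i, y, kk)}}"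
    if "(\<tau>1, \<tau>2, \<tau>3, \<tau>4) \<in> quads n" for \<tau>1 \<tau>2 \<tau>3 \<tau>4
    using relabelling.card_conflicts_file_layer_symbol_le[OF relabelling_quad[OF that]] .
  show "real (card {\<sigma>\<in>quads n. case \<sigma> of (\<tau>1, \<tau>2, \<tau>3, \<tau>4) \<Rightarrow>
      k \<le> card {i\<in>{1..n}. \<tau>2 (bxor (bxor (inv \<tau>1 i) (inv \<tau>3 kk)) (inv \<tau>4 s)) \<in> {y\<in>{1..n}. s \<in> A (i, y, kk)}}})
    \<le> fact n ^ 4 * real g ^ k / fact k"
  proof (rule card_quads_hits2_le, intro conjI ballI)
    fix \<tau>1 \<tau>3 \<tau>4 assume \<tau>: "\<tau>1 \<in> perms n" "\<tau>3 \<in> perms n" "\<tau>4 \<in> perms n"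
    show "inj_on (\<lambda>i. bxor (bxor (inv \<tau>1 i) (inv \<tau>3 kk)) (inv \<tau>4 s)) {1..n}"
      using inj_on_bxor_inv_perm[OF \<tau>(1), of "bxor (inv \<tau>3 kk) (inv \<tau>4 s)"] by (simp add: bxor_ac)
    show "(\<lambda>i. bxor (bxor (inv \<tau>1 i) (inv \<tau>3 kk)) (inv \<tau>4 s)) ` {1..n} \<subseteq> {1..n}"
      using assms \<tau> by (blast intro: bxor_closed inv_perm_in_range)
    fix i assume "i \<in> {1..n}"
    then show "finite {y\<in>{1..n}. s \<in> A (i, y, kk)}" "card {y\<in>{1..n}. s \<in> A (i, y, kk)} \<le> g"
      using mcube_row[OF A _ assms(1)] by auto
  qed
qed simp

lemma card_many_conflicts_diagonal_le:
  assumes "u \<in> {1..n}" "v \<in> {1..n}"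
  shows "real (card (many_conflicts n A k (\<lambda>\<sigma>. diagonal n \<sigma> u v))) \<le> fact n ^ 4 * real g ^ k / fact k"
proof (rule card_le_real_bound[OF many_conflicts_subset])
  show "card (conflicts n (latin (\<tau>1, \<tau>2, \<tau>3, \<tau>4)) A \<inter> diagonal n (\<tau>1, \<tau>2, \<tau>3, \<tau>4) u v)
    \<le> card {e\<in>{1..n}. \<tau>4 (bxor (bxor u v) e) \<in> A (\<tau>1 (bxor u e), \<tau>2 (bxor v e), \<tau>3 e)}"
    if "(\<tau>1, \<tau>2, \<tau>3, \<tau>4) \<in> quads n" for \<tau>1 \<tau>2 \<tau>3 \<tau>4
    using relabelling.card_conflicts_diagonal_le[OF relabelling_quad[OF that] assms] .
  show "real (card {\<sigma>\<in>quads n. case \<sigma> of (\<tau>1, \<tau>2, \<tau>3, \<tau>4) \<Rightarrow>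
      k \<le> card {e\<in>{1..n}. \<tau>4 (bxor (bxor u v) e) \<in> A (\<tau>1 (bxor u e), \<tau>2 (bxor v e), \<tau>3 e)}})
    \<le> fact n ^ 4 * real g ^ k / fact k"
  proof (rule card_quads_hits4_le, intro conjI ballI)
    show "inj_on (bxor (bxor u v)) {1..n}"
      by (rule inj_on_bxor)
    show "bxor (bxor u v) ` {1..n} \<subseteq> {1..n}"
      using assms by (blast intro: bxor_closed)
    fix \<tau>1 \<tau>2 \<tau>3 e assume \<tau>: "\<tau>1 \<in> perms n" "\<tau>2 \<in> perms n" "\<tau>3 \<in> perms n" and e: "e \<in> {1..n}"
    have "(\<tau>1 (bxor u e), \<tau>2 (bxor v e), \<tau>3 e) \<in> cells n"
      unfolding cells_def using assms e
      by (blast intro: bxor_closed perm_in_range[OF \<tau>(1)] perm_in_range[OF \<tau>(2)] perm_in_range[OF \<tau>(3)])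
    then show "finite (A (\<tau>1 (bxor u e), \<tau>2 (bxor v e), \<tau>3 e))" "card (A (\<tau>1 (bxor u e), \<tau>2 (bxor v e), \<tau>3 e)) \<le> g"
      using mcube_cell[OF A] by auto
  qed
qed simp

lemma card_many_conflicts_watched_le:
  assumes "X \<in> watched_sets n"
  shows "real (card (many_conflicts n A k X)) \<le> fact n ^ 4 * real g ^ k / fact k"
  using assms unfolding watched_sets_def
proof (elim UnE imageE)
  fix R assume "X = (\<lambda>_. R)" "R \<in> rows n" then show ?thesis
    using card_many_conflicts_row_le by simp
next
  fix R assume "X = (\<lambda>_. R)" "R \<in> columns n" then show ?thesis
    using card_many_conflicts_column_le by simp
next
  fix R assume "X = (\<lambda>_. R)" "R \<in> files n" then show ?thesis
    using card_many_conflicts_file_le by simp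
next
  fix p assume "X = (\<lambda>(i, s) \<sigma>. {c\<in>cells n. fst c = i \<and> latin \<sigma> c = s}) p" "p \<in> {1..n} \<times> {1..n}"
  then show ?thesis
    using card_many_conflicts_row_layer_le by (cases p) simp
next
  fix p assume "X = (\<lambda>(j, s) \<sigma>. {c\<in>cells n. fst (snd c) = j \<and> latin \<sigma> c = s}) p" "p \<in> {1..n} \<times> {1..n}"
  then show ?thesis
    using card_many_conflicts_column_layer_le by (cases p) simp
next
  fix p assume "X = (\<lambda>(k, s) \<sigma>. {c\<in>cells n. snd (snd c) = k \<and> latin \<sigma> c = s}) p" "p \<in> {1..n} \<times> {1..n}"
  then show ?thesis
    using card_many_conflicts_file_layer_le by (cases p) simp
next
  fix p assume "X = (\<lambda>(u, v) \<sigma>. diagonal n \<sigma> u v) p" "p \<in> {1..n} \<times> {1..n}"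
  then show ?thesis
    using card_many_conflicts_diagonal_le by (cases p) simp
qed

lemma corner_cells:
  assumes "(i, j, kk) \<in> cells n" "\<tau>1 \<in> perms n" "\<tau>2 \<in> perms n" "\<tau>3 \<in> perms n" "d \<in> {1..n}"
  shows "(translate \<tau>1 d i, translate \<tau>2 d j, kk) \<in> cells n"
    "(translate \<tau>1 d i, j, translate \<tau>3 d kk) \<in> cells n"
    "(i, translate \<tau>2 d j, translate \<tau>3 d kk) \<in> cells n"
  using assms translate_in_range[OF assms(2)] translate_in_range[OF assms(3)] translate_in_range[OF assms(4)]
  by (auto simp: cells_def)

lemma card_two_edge_defect_quads_le:
  assumes c: "(i, j, kk) \<in> cells n"
  shows "real (card {\<sigma>\<in>quads n. r \<le> card (defects n A \<sigma> (i, j, kk) {(True, True, False), (True, False, True)})})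
    \<le> fact n ^ 4 * real (2 * g) ^ r / fact r"
proof (rule card_le_real_bound[OF quads_filter_mono])
  show "r \<le> card {d\<in>{1..n} - {1}. \<tau>4 (bxor (bxor (bxor (inv \<tau>1 i) (inv \<tau>2 j)) (inv \<tau>3 kk)) d)
        \<in> A (translate \<tau>1 d i, translate \<tau>2 d j, kk) \<union> A (translate \<tau>1 d i, j, translate \<tau>3 d kk)}"
    if "(\<tau>1, \<tau>2, \<tau>3, \<tau>4) \<in> quads n"
      "r \<le> card (defects n A (\<tau>1, \<tau>2, \<tau>3, \<tau>4) (i, j, kk) {(True, True, False), (True, False, True)})"
    for \<tau>1 \<tau>2 \<tau>3 \<tau>4
    using le_card_mono[OF that(2) relabelling.defects_two_edges_subset[OF relabelling_quad[OF that(1)] c]]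
    by simp
  show "real (card {\<sigma>\<in>quads n. case \<sigma> of (\<tau>1, \<tau>2, \<tau>3, \<tau>4) \<Rightarrow>
      r \<le> card {d\<in>{1..n} - {1}. \<tau>4 (bxor (bxor (bxor (inv \<tau>1 i) (inv \<tau>2 j)) (inv \<tau>3 kk)) d)
        \<in> A (translate \<tau>1 d i, translate \<tau>2 d j, kk) \<union> A (translate \<tau>1 d i, j, translate \<tau>3 d kk)}})
    \<le> fact n ^ 4 * real (2 * g) ^ r / fact r"
  proof (rule card_quads_hits4_le, intro conjI ballI)
    fix \<tau>1 \<tau>2 \<tau>3 assume \<tau>: "\<tau>1 \<in> perms n" "\<tau>2 \<in> perms n" "\<tau>3 \<in> perms n"
    let ?x = "bxor (bxor (inv \<tau>1 i) (inv \<tau>2 j)) (inv \<tau>3 kk)"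
    have x: "?x \<in> {1..n}"
      using c \<tau> unfolding cells_def by (blast intro: bxor_closed inv_perm_in_range)
    show "inj_on (bxor ?x) ({1..n} - {1})"
      using inj_on_bxor by (rule inj_on_subset) auto
    show "bxor ?x ` ({1..n} - {1}) \<subseteq> {1..n}"
      using x by (blast intro: bxor_closed)
    fix d assume "d \<in> {1..n} - {1}"
    then have "(translate \<tau>1 d i, translate \<tau>2 d j, kk) \<in> cells n" "(translate \<tau>1 d i, j, translate \<tau>3 d kk) \<in> cells n"
      using corner_cells[OF c \<tau>] by auto
    then have "finite (A (translate \<tau>1 d i, translate \<tau>2 d j, kk))" "card (A (translate \<tau>1 d i, translate \<tau>2 d j, kk)) \<le> g"
      "finite (A (translate \<tau>1 d i, j, translate \<tau>3 d kk))" "card (A (translate \<tau>1 d i, j, translate \<tau>3 d kk)) \<le> g"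
      using mcube_cell[OF A] by auto
    then show "finite (A (translate \<tau>1 d i, translate \<tau>2 d j, kk) \<union> A (translate \<tau>1 d i, j, translate \<tau>3 d kk))"
      "card (A (translate \<tau>1 d i, translate \<tau>2 d j, kk) \<union> A (translate \<tau>1 d i, j, translate \<tau>3 d kk)) \<le> 2 * g"
      by (simp_all add: card_Un_le_add mult_2)
  qed
qed simp

lemma card_face_defect_quads_le:
  assumes c: "(i, j, kk) \<in> cells n"
  shows "real (card {\<sigma>\<in>quads n. m \<le> card (defects n A \<sigma> (i, j, kk) {(False, True, True)})})
    \<le> fact n ^ 4 * real g ^ m / fact m"
proof (rule card_le_real_bound[OF quads_filter_mono])
  show "m \<le> card {d\<in>{1..n} - {1}. \<tau>4 (bxor (bxor (bxor (inv \<tau>1 i) (inv \<tau>2 j)) (inv \<tau>3 kk)) d)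
        \<in> A (i, translate \<tau>2 d j, translate \<tau>3 d kk)}"
    if "(\<tau>1, \<tau>2, \<tau>3, \<tau>4) \<in> quads n"
      "m \<le> card (defects n A (\<tau>1, \<tau>2, \<tau>3, \<tau>4) (i, j, kk) {(False, True, True)})"
    for \<tau>1 \<tau>2 \<tau>3 \<tau>4
    using le_card_mono[OF that(2) relabelling.defects_face_subset[OF relabelling_quad[OF that(1)] c]]
    by simp
  show "real (card {\<sigma>\<in>quads n. case \<sigma> of (\<tau>1, \<tau>2, \<tau>3, \<tau>4) \<Rightarrow>
      m \<le> card {d\<in>{1..n} - {1}. \<tau>4 (bxor (bxor (bxor (inv \<tau>1 i) (inv \<tau>2 j)) (inv \<tau>3 kk)) d)
        \<in> A (i, translate \<tau>2 d j, translate \<tau>3 d kk)}})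
    \<le> fact n ^ 4 * real g ^ m / fact m"
  proof (rule card_quads_hits4_le, intro conjI ballI)
    fix \<tau>1 \<tau>2 \<tau>3 assume \<tau>: "\<tau>1 \<in> perms n" "\<tau>2 \<in> perms n" "\<tau>3 \<in> perms n"
    let ?x = "bxor (bxor (inv \<tau>1 i) (inv \<tau>2 j)) (inv \<tau>3 kk)"
    have x: "?x \<in> {1..n}"
      using c \<tau> unfolding cells_def by (blast intro: bxor_closed inv_perm_in_range)
    show "inj_on (bxor ?x) ({1..n} - {1})"
      using inj_on_bxor by (rule inj_on_subset) auto
    show "bxor ?x ` ({1..n} - {1}) \<subseteq> {1..n}"
      using x by (blast intro: bxor_closed)
    fix d assume "d \<in> {1..n} - {1}"
    then have "(i, translate \<tau>2 d j, translate \<tau>3 d kk) \<in> cells n"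
      using corner_cells[OF c \<tau>] by auto
    then show "finite (A (i, translate \<tau>2 d j, translate \<tau>3 d kk))"
      "card (A (i, translate \<tau>2 d j, translate \<tau>3 d kk)) \<le> g"
      using mcube_cell[OF A] by auto
  qed
qed simp

lemma card_opposite_defect_quads_fixing_le:
  assumes c: "(i, j, kk) \<in> cells n" and e: "e \<in> {1..n}"
  shows "real (card {\<sigma>\<in>quads n. case \<sigma> of (\<tau>1, \<tau>2, \<tau>3, \<tau>4) \<Rightarrow> \<tau>3 e = kk \<and>
      r \<le> card {d\<in>{1..n} - {1}. \<tau>3 (bxor e d) \<in> {z\<in>{1..n}.
        \<tau>4 (bxor (bxor (inv \<tau>1 i) (inv \<tau>2 j)) e) \<in> A (translate \<tau>1 d i, translate \<tau>2 d j, z)}}})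
    \<le> fact n ^ 3 * fact (n - 1) * real g ^ r / fact r"
proof (rule card_quads_pointed_hits3_le[OF e], intro conjI ballI)
  show "inj_on (bxor e) ({1..n} - {1})"
    using inj_on_bxor by (rule inj_on_subset) auto
  show "bxor e ` ({1..n} - {1}) \<subseteq> {1..n} - {e}"
  proof (rule image_subsetI)
    fix d assume "d \<in> {1..n} - {1}"
    with e show "bxor e d \<in> {1..n} - {e}"
      using bxor_closed[OF e] bxor_eq_self_iff[of e d] by auto
  qed
  fix \<tau>1 \<tau>2 \<tau>4 d assume \<tau>: "\<tau>1 \<in> perms n" "\<tau>2 \<in> perms n" "\<tau>4 \<in> perms n" and d: "d \<in> {1..n} - {1}"
  have "translate \<tau>1 d i \<in> {1..n}" "translate \<tau>2 d j \<in> {1..n}"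
    using c d translate_in_range[OF \<tau>(1)] translate_in_range[OF \<tau>(2)] by (auto simp: cells_def)
  then show "finite {z\<in>{1..n}. \<tau>4 (bxor (bxor (inv \<tau>1 i) (inv \<tau>2 j)) e) \<in> A (translate \<tau>1 d i, translate \<tau>2 d j, z)}"
    "card {z\<in>{1..n}. \<tau>4 (bxor (bxor (inv \<tau>1 i) (inv \<tau>2 j)) e) \<in> A (translate \<tau>1 d i, translate \<tau>2 d j, z)} \<le> g"
    using mcube_file[OF A] by auto
qed

lemma card_opposite_defect_quads_le:
  assumes c: "(i, j, kk) \<in> cells n"
  shows "real (card {\<sigma>\<in>quads n. r \<le> card (defects n A \<sigma> (i, j, kk) {(True, True, True)})})
    \<le> fact n ^ 4 * real g ^ r / fact r"
proof -
  define E where "E e = {\<sigma>\<in>quads n. case \<sigma> of (\<tau>1, \<tau>2, \<tau>3, \<tau>4) \<Rightarrow> \<tau>3 e = kk \<and>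
    r \<le> card {d\<in>{1..n} - {1}. \<tau>3 (bxor e d) \<in> {z\<in>{1..n}.
      \<tau>4 (bxor (bxor (inv \<tau>1 i) (inv \<tau>2 j)) e) \<in> A (translate \<tau>1 d i, translate \<tau>2 d j, z)}}}" for e
  (* Splitting according to the position e = inv \<tau>3 kk makes the symbol of the cell independent of \<tau>3. *)
  have "{\<sigma>\<in>quads n. r \<le> card (defects n A \<sigma> (i, j, kk) {(True, True, True)})} \<subseteq> (\<Union>e\<in>{1..n}. E e)"
  proof
    fix \<sigma> assume \<sigma>: "\<sigma> \<in> {\<sigma>\<in>quads n. r \<le> card (defects n A \<sigma> (i, j, kk) {(True, True, True)})}"
    obtain \<tau>1 \<tau>2 \<tau>3 \<tau>4 where \<sigma>_eq: "\<sigma> = (\<tau>1, \<tau>2, \<tau>3, \<tau>4)"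
      by (cases \<sigma>) auto
    interpret relabelling t n \<tau>1 \<tau>2 \<tau>3 \<tau>4
      using \<sigma> \<sigma>_eq relabelling_quad by simp
    have "inv \<tau>3 kk \<in> {1..n}"
      using c inv_perm_in_range[OF perms(3)] by (simp add: cells_def)
    moreover have "r \<le> card {d\<in>{1..n} - {1}. \<tau>3 (bxor (inv \<tau>3 kk) d)
        \<in> {z\<in>{1..n}. L (i, j, kk) \<in> A (translate \<tau>1 d i, translate \<tau>2 d j, z)}}"
      using \<sigma> \<sigma>_eq by (intro le_card_mono[OF _ defects_opposite_subset[OF c]]) simp_all
    then have "\<sigma> \<in> E (inv \<tau>3 kk)"
      using \<sigma> by (simp add: E_def \<sigma>_eq latin_apply)
    ultimately show "\<sigma> \<in> (\<Union>e\<in>{1..n}. E e)"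
      by blast
  qed
  moreover have "finite (\<Union>e\<in>{1..n}. E e)"
    by (rule finite_subset[of _ "quads n"]) (auto simp: E_def)
  moreover have "real (card (E e)) \<le> fact n ^ 3 * fact (n - 1) * real g ^ r / fact r" if "e \<in> {1..n}" for e
    unfolding E_def using c that by (rule card_opposite_defect_quads_fixing_le)
  ultimately have "real (card {\<sigma>\<in>quads n. r \<le> card (defects n A \<sigma> (i, j, kk) {(True, True, True)})})
      \<le> real (card {1..n}) * (fact n ^ 3 * fact (n - 1) * real g ^ r / fact r)"
    by (metis (no_types, lifting) card_UN_le_real card_le_real_bound finite_atLeastAtMost)
  also have "\<dots> = fact n ^ 3 * (real n * fact (n - 1)) * real g ^ r / fact r"
    by simp
  also have "real n * fact (n - 1) = fact n"
    using n_ge_1 by (simp add: fact_reduce)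
  finally show ?thesis
    by (simp add: eval_nat_numeral)
qed

lemma card_defect_events_le:
  assumes "(i, j, kk) \<in> cells n" "real g ^ m / fact m \<le> (2 * real g) ^ r / fact r"
  shows "real (card (defect_events n A r m (i, j, kk))) \<le> 3 * (fact n ^ 4 * ((2 * real g) ^ r / fact r))"
proof -
  let ?q = "(2 * real g) ^ r / fact r"
  let ?P = "{\<sigma>\<in>quads n. r \<le> card (defects n A \<sigma> (i, j, kk) {(True, True, False), (True, False, True)})}"
  let ?F = "{\<sigma>\<in>quads n. m \<le> card (defects n A \<sigma> (i, j, kk) {(False, True, True)})}"
  let ?O = "{\<sigma>\<in>quads n. r \<le> card (defects n A \<sigma> (i, j, kk) {(True, True, True)})}"
  have "real (card ?P) \<le> fact n ^ 4 * ?q"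
    using card_two_edge_defect_quads_le[OF assms(1), of r] by simp
  moreover have "real (card ?F) \<le> fact n ^ 4 * ?q"
    using card_face_defect_quads_le[OF assms(1), of m] mult_left_mono[OF assms(2), of "fact n ^ 4"]
    by simp
  moreover have "real g ^ r / fact r \<le> ?q"
    by (intro divide_right_mono power_mono) auto
  then have "fact n ^ 4 * (real g ^ r / fact r) \<le> fact n ^ 4 * ?q"
    by (rule mult_left_mono) simp
  then have "real (card ?O) \<le> fact n ^ 4 * ?q"
    using card_opposite_defect_quads_le[OF assms(1), of r] by simp
  ultimately have "real (card (?P \<union> ?F \<union> ?O)) \<le> 3 * (fact n ^ 4 * ?q)"
    using card_Un_le_real[of "?P \<union> ?F" ?O] card_Un_le_real[of ?P ?F] by linarith
  moreover have "defect_events n A r m (i, j, kk) = ?P \<union> ?F \<union> ?O"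
    by (auto simp: defect_events_def)
  ultimately show ?thesis
    by simp
qed

lemma card_conflict_events_le:
  "real (card (\<Union>X\<in>watched_sets n. many_conflicts n A k X))
    \<le> fact n ^ 4 * (7 * real n ^ 2 * real g ^ k / fact k)"
proof -
  have "real (card (\<Union>X\<in>watched_sets n. many_conflicts n A k X))
      \<le> real (card (watched_sets n)) * (fact n ^ 4 * real g ^ k / fact k)"
    using card_many_conflicts_watched_le by (intro card_UN_le_real finite_watched_sets)
  also have "\<dots> \<le> real (7 * n ^ 2) * (fact n ^ 4 * real g ^ k / fact k)"
    using card_watched_sets_le[of n] by (intro mult_right_mono) (simp_all only: of_nat_le_iff, simp)
  finally show ?thesis
    by (simp add: mult_ac)
qed

lemma card_all_defect_events_le:
  assumes "real g ^ m / fact m \<le> (2 * real g) ^ r / fact r"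
  shows "real (card (\<Union>c\<in>cells n. defect_events n A r m c))
    \<le> fact n ^ 4 * (3 * real n ^ 3 * (2 * real g) ^ r / fact r)"
proof -
  have "real (card (\<Union>c\<in>cells n. defect_events n A r m c))
      \<le> real (card (cells n)) * (3 * (fact n ^ 4 * ((2 * real g) ^ r / fact r)))"
    using card_defect_events_le[OF _ assms] by (intro card_UN_le_real) (auto simp: cells_def)
  moreover have "real (card (cells n)) = real n ^ 3"
    by (simp add: cells_def card_cartesian_product power3_eq_cube)
  ultimately show ?thesis
    by (simp add: field_simps)
qed

end

lemma exists_good_quad:
  assumes A: "mcube n g A"
    and ineq: "7 * real n ^ 2 * real g ^ k / fact k + 3 * real n ^ 3 * (2 * real g) ^ r / fact r < 1"
    and m: "real g ^ m / fact m \<le> (2 * real g) ^ r / fact r"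
  shows "\<exists>\<sigma>\<in>quads n. (\<forall>X\<in>watched_sets n. \<sigma> \<notin> many_conflicts n A k X)
    \<and> (\<forall>c\<in>cells n. \<sigma> \<notin> defect_events n A r m c)"
proof -
  let ?C = "\<Union>X\<in>watched_sets n. many_conflicts n A k X"
  let ?D = "\<Union>c\<in>cells n. defect_events n A r m c"
  have "real (card (?C \<union> ?D)) \<le> real (card ?C) + real (card ?D)"
    by (rule card_Un_le_real)
  also have "\<dots> \<le> fact n ^ 4 * (7 * real n ^ 2 * real g ^ k / fact k)
      + fact n ^ 4 * (3 * real n ^ 3 * (2 * real g) ^ r / fact r)"
    using card_conflict_events_le[OF A, of k] card_all_defect_events_le[OF A m] by (rule add_mono)
  also have "\<dots> = fact n ^ 4 * (7 * real n ^ 2 * real g ^ k / fact k + 3 * real n ^ 3 * (2 * real g) ^ r / fact r)"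
    by (simp only: distrib_left)
  also have "\<dots> < fact n ^ 4 * 1"
    using ineq by (intro mult_strict_left_mono) simp_all
  finally have "?C \<union> ?D \<noteq> quads n"
    by (auto simp: card_quads)
  moreover have "?C \<union> ?D \<subseteq> quads n"
    by (auto simp: many_conflicts_def defect_events_def)
  ultimately show ?thesis
    by blast
qed

end

context relabelling
begin

lemma quad_in_quads: "\<sigma> \<in> quads n"
  by (simp add: quads_def)

lemma conflict_bounds:
  assumes "\<forall>X\<in>watched_sets n. \<sigma> \<notin> many_conflicts n A k X"
  shows "\<forall>R\<in>rows n. card (conflicts n L A \<inter> R) \<le> k"
    "\<forall>R\<in>columns n. card (conflicts n L A \<inter> R) \<le> k"
    "\<forall>R\<in>files n. card (conflicts n L A \<inter> R) \<le> k"
    "\<forall>S\<in>symbol_sets n L. card (conflicts n L A \<inter> S) \<le> k"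
    "\<forall>T. transversal_set n L T \<longrightarrow> card (conflicts n L A \<inter> T) \<le> k"
proof -
  have lt: "card (conflicts n L A \<inter> X \<sigma>) < k" if "X \<in> watched_sets n" for X
    using assms that quad_in_quads by (auto simp: many_conflicts_def)
  have "card (conflicts n L A \<inter> R) < k" if "R \<in> rows n \<union> columns n \<union> files n" for R
    using lt[OF watched_sets_memI(1)[OF that]] by simp
  then show "\<forall>R\<in>rows n. card (conflicts n L A \<inter> R) \<le> k"
    "\<forall>R\<in>columns n. card (conflicts n L A \<inter> R) \<le> k"
    "\<forall>R\<in>files n. card (conflicts n L A \<inter> R) \<le> k"
    by (simp_all add: less_imp_le)
  show "\<forall>S\<in>symbol_sets n L. card (conflicts n L A \<inter> S) \<le> k"
  proof
    fix S assume "S \<in> symbol_sets n L"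
    then show "card (conflicts n L A \<inter> S) \<le> k"
      unfolding symbol_sets_def
      using lt[OF watched_sets_memI(2)] lt[OF watched_sets_memI(3)] lt[OF watched_sets_memI(4)]
      by (auto intro: less_imp_le)
  qed
  show "\<forall>T. transversal_set n L T \<longrightarrow> card (conflicts n L A \<inter> T) \<le> k"
  proof (intro allI impI)
    fix T assume "transversal_set n L T"
    then obtain u v where uv: "u \<in> {1..n}" "v \<in> {1..n}" and "T \<subseteq> diagonal n \<sigma> u v"
      using transversal_subset_diagonal by blast
    then have "card (conflicts n L A \<inter> T) \<le> card (conflicts n L A \<inter> diagonal n \<sigma> u v)"
      by (intro card_mono) (auto simp: conflicts_def cells_def)
    also have "\<dots> < k"
      using lt[OF watched_sets_memI(5)[OF uv]] by simp
    finally show "card (conflicts n L A \<inter> T) \<le> k"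
      by simp
  qed
qed

(* The bound is (n - 1) - 4 g - (r - 1) - (m - 1) - (r - 1): the cell and its three line
   neighbours spoil at most g of the 3-cubes through it each, the remaining kinds of corner
   fewer than r, m and r. *)
lemma many_allowed_3cubes:
  assumes A: "mcube n g A" and c: "(i, j, k) \<in> cells n" and "\<sigma> \<notin> defect_events n A r m (i, j, k)"
  shows "real n + 2 - 4 * real g - 2 * real r - real m \<le> real (card {C. allowed_3cube n L A C \<and> (i, j, k) \<in> C})"
proof -
  let ?D = "card (defects n A \<sigma> (i, j, k) UNIV)"
  have "?D + 3 \<le> 4 * g + 2 * r + m"
    using card_defects_le[OF c A] assms(3) quad_in_quads by (auto simp: defect_events_def not_le)
  moreover have "n - 1 - ?D \<le> card {C. allowed_3cube n L A C \<and> (i, j, k) \<in> C}"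
    by (rule card_allowed_3cubes_ge[OF c])
  ultimately show ?thesis
    using n_ge_1 by linarith
qed

end

context boolean_order
begin

lemma good_relabelling_exists:
  assumes A: "mcube n g A"
    and ineq: "7 * real n ^ 2 * real g ^ k / fact k + 3 * real n ^ 3 * (2 * real g) ^ r / fact r < 1"
    and b: "b \<le> real n + 1 - 2 * real g - 3 * real r"
  shows "\<exists>\<tau>1 \<tau>2 \<tau>3 \<tau>4.
     \<tau>1 permutes {1..n} \<and> \<tau>2 permutes {1..n} \<and> \<tau>3 permutes {1..n} \<and> \<tau>4 permutes {1..n} \<and>
     (let L = apply_sigma \<tau>1 \<tau>2 \<tau>3 \<tau>4 boolean_cube in
       (\<forall>R\<in>rows n. card (conflicts n L A \<inter> R) \<le> k) \<and>
       (\<forall>R\<in>columns n. card (conflicts n L A \<inter> R) \<le> k) \<and>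
       (\<forall>R\<in>files n. card (conflicts n L A \<inter> R) \<le> k) \<and>
       (\<forall>S\<in>symbol_sets n L. card (conflicts n L A \<inter> S) \<le> k) \<and>
       (\<forall>T. transversal_set n L T \<longrightarrow> card (conflicts n L A \<inter> T) \<le> k) \<and>
       (\<forall>c\<in>cells n. real (card {C. allowed_3cube n L A C \<and> c \<in> C}) \<ge> b))"
proof -
  let ?q = "(2 * real g) ^ r / fact r"
  have "1 \<le> real n ^ 3"
    using n_ge_1 by (simp add: one_le_power)
  then have "?q \<le> 3 * real n ^ 3 * (2 * real g) ^ r / fact r"
    using mult_right_mono[of 1 "3 * real n ^ 3" ?q] by simp
  moreover have "0 \<le> 7 * real n ^ 2 * real g ^ k / fact k"
    by simp
  ultimately have q: "?q < 1"
    using ineq by linarith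
  define m where "m = r + 1 - 2 * g"
  have m: "real g ^ m / fact m \<le> ?q"
    unfolding m_def using q by (rule power_div_fact_le_if_less_1)
  have m_eq: "real m = real r + 1 - 2 * real g"
    using four_mult_le_if_power_div_fact_less_1[OF _ q] by (cases "g = 0") (auto simp: m_def)
  obtain \<tau>1 \<tau>2 \<tau>3 \<tau>4 where \<sigma>: "(\<tau>1, \<tau>2, \<tau>3, \<tau>4) \<in> quads n"
    and good: "\<forall>X\<in>watched_sets n. (\<tau>1, \<tau>2, \<tau>3, \<tau>4) \<notin> many_conflicts n A k X"
      "\<forall>c\<in>cells n. (\<tau>1, \<tau>2, \<tau>3, \<tau>4) \<notin> defect_events n A r m c"
    using exists_good_quad[OF A ineq m] by auto
  interpret relabelling t n \<tau>1 \<tau>2 \<tau>3 \<tau>4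
    using \<sigma> by (rule relabelling_quad)
  have "\<forall>c\<in>cells n. b \<le> real (card {C. allowed_3cube n L A C \<and> c \<in> C})"
    using many_allowed_3cubes[OF A _ good(2)[rule_format]] m_eq b by (force simp: cells_def)
  moreover have "apply_sigma \<tau>1 \<tau>2 \<tau>3 \<tau>4 boolean_cube = L"
    by (simp add: latin_def)
  ultimately show ?thesis
    unfolding Let_def using perms[unfolded perms_def] conflict_bounds[OF good(1)]
    by (intro exI[of _ \<tau>1] exI[of _ \<tau>2] exI[of _ \<tau>3] exI[of _ \<tau>4] conjI) simp_all
qed

end

theorem mainTheorem2:
  fixes \<alpha> \<gamma> \<kappa> :: real and t n g k r :: nat and A :: "cell \<Rightarrow> nat set"
  assumes n_def: "n = 2 ^ t"
    and g_def: "real g = \<gamma> * real n"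
    and k_def: "real k = \<kappa> * real n"
    and r_def: "real r = (1 - \<alpha> - 2 * \<gamma>) * real n / 3"
    and ineq: "7 * real n ^ 2 * (real g) ^ k / fact k
               + 3 * real n ^ 3 * (2 * real g) ^ r / fact r < 1"
    and A: "mcube n g A"
  shows "\<exists>\<tau>1 \<tau>2 \<tau>3 \<tau>4.
     \<tau>1 permutes {1..n} \<and> \<tau>2 permutes {1..n} \<and> \<tau>3 permutes {1..n} \<and> \<tau>4 permutes {1..n} \<and>
     (let L = apply_sigma \<tau>1 \<tau>2 \<tau>3 \<tau>4 boolean_cube in
       (\<forall>R\<in>rows n. card (conflicts n L A \<inter> R) \<le> k) \<and>
       (\<forall>R\<in>columns n. card (conflicts n L A \<inter> R) \<le> k) \<and>
       (\<forall>R\<in>files n. card (conflicts n L A \<inter> R) \<le> k) \<and>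
       (\<forall>S\<in>symbol_sets n L. card (conflicts n L A \<inter> S) \<le> k) \<and>
       (\<forall>T. transversal_set n L T \<longrightarrow> card (conflicts n L A \<inter> T) \<le> k) \<and>
       (\<forall>c\<in>cells n. real (card {C. allowed_3cube n L A C \<and> c \<in> C}) \<ge> \<alpha> * real n))"
proof -
  interpret boolean_order t n
    using n_def by unfold_locales
  have "\<alpha> * real n \<le> real n + 1 - 2 * real g - 3 * real r"
    using g_def r_def by (simp add: algebra_simps)
  then show ?thesis
    by (rule good_relabelling_exists[OF A ineq])
qed

end
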